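(* Let $\alpha=(\alpha_k)_{k\in\mathbb{N}}\in\ell^2$ and for $n\in\mathbb{N}$ let $J_n=\sup_{m\ge n}(m+1-n)^{1/2}\big(\sum_{k=m}^\infty|\alpha_k|^2\big)^{1/2}$. Then $$\lim_{n\to\infty}J_n\le\|R_\alpha\|_e\le2\sqrt2\lim_{n\to\infty}J_n.$$ In particular, $R_\alpha$ is compact if and only if $\lim_{n\to\infty}J_n=0$.
   Context: $\mathbb{N}=\{0,1,2,\dots\}$; $\ell^2$ is the space of square-summable functions $\mathbb{N}\to\mathbb{C}$. The Rhaly operator is $(R_\alpha f)(k)=\alpha_k\sum_{j=0}^k f(j)$. The sequence $(J_n)$ is nonincreasing, so its limit exists in $[0,\infty]$. The essential norm is $\|T\|_e=\inf\{\|T-P\|: P \text{ a finite-rank operator on }\ell^2\}$, where $\|\cdot\|$ is the operator norm (possibly $+\infty$). *)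

theory Defs
  imports "HOL-Analysis.Analysis"
begin

definition l2 :: "(nat \<Rightarrow> complex) set" where
  "l2 = {f. summable (\<lambda>k. (cmod (f k))\<^sup>2)}"

definition l2norm :: "(nat \<Rightarrow> complex) \<Rightarrow> real" where
  "l2norm f = sqrt (\<Sum>k. (cmod (f k))\<^sup>2)"

definition l2enorm :: "(nat \<Rightarrow> complex) \<Rightarrow> ennreal" where
  "l2enorm g = (if g \<in> l2 then ennreal (l2norm g) else \<infinity>)"

definition opnorm :: "((nat \<Rightarrow> complex) \<Rightarrow> (nat \<Rightarrow> complex)) \<Rightarrow> ennreal" where
  "opnorm T = (SUP f \<in> {f \<in> l2. l2norm f \<le> 1}. l2enorm (T f))"

definition finite_rank_op :: "((nat \<Rightarrow> complex) \<Rightarrow> (nat \<Rightarrow> complex)) \<Rightarrow> bool" where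
  "finite_rank_op P \<longleftrightarrow>
     (\<forall>f\<in>l2. P f \<in> l2) \<and>
     (\<forall>f\<in>l2. \<forall>g\<in>l2. P (\<lambda>k. f k + g k) = (\<lambda>k. P f k + P g k)) \<and>
     (\<forall>f\<in>l2. \<forall>c::complex. P (\<lambda>k. c * f k) = (\<lambda>k. c * P f k)) \<and>
     (\<exists>C. \<forall>f\<in>l2. l2norm (P f) \<le> C * l2norm f) \<and>
     (\<exists>(n::nat) (v :: nat \<Rightarrow> nat \<Rightarrow> complex) (\<phi> :: nat \<Rightarrow> (nat \<Rightarrow> complex) \<Rightarrow> complex).
        (\<forall>i<n. v i \<in> l2) \<and> (\<forall>f\<in>l2. P f = (\<lambda>k. \<Sum>i<n. \<phi> i f * v i k)))"

definition ess_norm :: "((nat \<Rightarrow> complex) \<Rightarrow> (nat \<Rightarrow> complex)) \<Rightarrow> ennreal" where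
  "ess_norm T = (INF P \<in> {P. finite_rank_op P}. opnorm (\<lambda>f k. T f k - P f k))"

definition compact_op :: "((nat \<Rightarrow> complex) \<Rightarrow> (nat \<Rightarrow> complex)) \<Rightarrow> bool" where
  "compact_op T \<longleftrightarrow>
     (\<forall>f\<in>l2. T f \<in> l2) \<and>
     (\<forall>f\<in>l2. \<forall>g\<in>l2. T (\<lambda>k. f k + g k) = (\<lambda>k. T f k + T g k)) \<and>
     (\<forall>f\<in>l2. \<forall>c::complex. T (\<lambda>k. c * f k) = (\<lambda>k. c * T f k)) \<and>
     (\<forall>fs :: nat \<Rightarrow> nat \<Rightarrow> complex. (\<forall>n. fs n \<in> l2) \<and> (\<exists>C. \<forall>n. l2norm (fs n) \<le> C) \<longrightarrow>
        (\<exists>r g. strict_mono r \<and> g \<in> l2 \<and> (\<lambda>n. l2norm (\<lambda>k. T (fs (r n)) k - g k)) \<longlonglongrightarrow> 0))"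

definition rhaly :: "(nat \<Rightarrow> complex) \<Rightarrow> (nat \<Rightarrow> complex) \<Rightarrow> (nat \<Rightarrow> complex)" where
  "rhaly \<alpha> f = (\<lambda>k. \<alpha> k * (\<Sum>j\<le>k. f j))"

definition J :: "(nat \<Rightarrow> complex) \<Rightarrow> nat \<Rightarrow> ennreal" where
  "J \<alpha> n = (SUP m \<in> {n..}. ennreal (sqrt (real (m + 1 - n)) * sqrt (\<Sum>k. (cmod (\<alpha> (k + m)))\<^sup>2)))"

end

theory Submission
  imports Defs "HOL-Library.Diagonal_Subsequence"
begin

text \<open>Split R_\<alpha> at n into a finite-rank head, which only sees f 0, ..., f (n - 1), and a
  tail. A weighted discrete Hardy inequality, whose weight condition is exactly J_n, bounds the
  norm of the tail by 2 J_n; this gives the upper bound (even with constant 2).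
  For the lower bound, for x < lim J_n and any start a take the function that is 1 on [a, m]
  and then, after a long gap, a long flat negative block cancelling its sum: its image under
  R_\<alpha> is supported in a finite window and is at least x times as large. A sequence of such
  test functions with disjoint windows is orthonormal with orthogonal images, so a finite-rank
  P of rank n annihilates a unit combination of n + 1 of them, on which R_\<alpha> - P still has
  norm at least x. The same escaping windows contradict compactness when lim J_n > 0, while for
  lim J_n = 0 compactness follows from a diagonal subsequence, since the head is continuous in
  finitely many coordinates and the tail is uniformly small.\<close>

section \<open>A discrete weighted Hardy inequality\<close>

lemma sum_inverse_sqrt_le: "(\<Sum>j\<le>k. 1 / sqrt (real j + 1)) \<le> 2 * sqrt (real k + 1)"
proof (induction k)
  case 0
  then show ?case by simp
next
  case (Suc k)
  define a where "a = sqrt (real k + 1)"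
  define b where "b = sqrt (real k + 2)"
  have "0 < a" "a \<le> b" "a * a = real k + 1" "b * b = real k + 2"
    unfolding a_def b_def by auto
  then have "1 = (b - a) * (b + a)" by algebra
  also have "\<dots> \<le> (b - a) * (2 * b)"
    using \<open>a \<le> b\<close> by (intro mult_left_mono) auto
  finally have "1 / b \<le> 2 * b - 2 * a"
    using \<open>0 < a\<close> \<open>a \<le> b\<close> by (simp add: field_simps)
  with Suc show ?case
    unfolding a_def b_def by (simp add: add.commute add.left_commute)
qed

lemma square_sum_le_sqrt_weighted:
  fixes a :: "nat \<Rightarrow> real"
  shows "(\<Sum>j\<le>k. a j)\<^sup>2 \<le> 2 * sqrt (real k + 1) * (\<Sum>j\<le>k. (a j)\<^sup>2 * sqrt (real j + 1))"
proof -
  define q where "q j = sqrt (sqrt (real j + 1))" for j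
  have "q j > 0" "(q j)\<^sup>2 = sqrt (real j + 1)" for j
    unfolding q_def by simp_all
  then have "(\<Sum>j\<le>k. a j)\<^sup>2 = (\<Sum>j\<le>k. (1 / q j) * (a j * q j))\<^sup>2"
    by (simp add: less_imp_neq[symmetric])
  also have "\<dots> \<le> (\<Sum>j\<le>k. (1 / q j)\<^sup>2) * (\<Sum>j\<le>k. (a j * q j)\<^sup>2)"
    by (rule Cauchy_Schwarz_ineq_sum)
  also have "\<dots> = (\<Sum>j\<le>k. 1 / sqrt (real j + 1)) * (\<Sum>j\<le>k. (a j)\<^sup>2 * sqrt (real j + 1))"
    by (simp add: power_divide power_mult_distrib \<open>\<And>j. (q j)\<^sup>2 = sqrt (real j + 1)\<close>)
  also have "\<dots> \<le> 2 * sqrt (real k + 1) * (\<Sum>j\<le>k. (a j)\<^sup>2 * sqrt (real j + 1))"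
    by (intro mult_right_mono sum_inverse_sqrt_le sum_nonneg) auto
  finally show ?thesis .
qed

lemma sum_atMost_nested_swap:
  fixes g :: "nat \<Rightarrow> nat \<Rightarrow> 'a::comm_monoid_add"
  shows "(\<Sum>k\<le>K. \<Sum>j\<le>k. g k j) = (\<Sum>j\<le>K. \<Sum>k\<in>{j..K}. g k j)"
  by (induction K) (auto simp: atLeastAtMostSuc_conv sum.distrib add_ac)

text \<open>Summation by parts, using that the tail mass of the weights from m on is at most
  B / (m + 1).\<close>
lemma sum_sqrt_weighted_tail_le':
  fixes w :: "nat \<Rightarrow> real"
  assumes "B \<ge> 0"
    and tail_le: "\<And>m. m \<le> K \<Longrightarrow> (real m + 1) * (\<Sum>k\<in>{m..K}. w k) \<le> B"
    and "j \<le> K"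
  shows "(\<Sum>k\<in>{j..K}. w k * sqrt (real k + 1))
    \<le> sqrt (real j + 1) * (\<Sum>k\<in>{j..K}. w k) + B / sqrt (real j + 1)"
  using \<open>j \<le> K\<close>
proof (induction j rule: inc_induct)
  case base
  then show ?case using \<open>B \<ge> 0\<close> by simp
next
  case (step n)
  define T where "T = (\<Sum>k\<in>{Suc n..K}. w k)"
  define a where "a = sqrt (real n + 1)"
  define b where "b = sqrt (real n + 2)"
  have "0 < a" "a \<le> b" "b * b = real n + 2"
    unfolding a_def b_def by auto
  have "(real n + 2) * T \<le> B"
    using tail_le[of "Suc n"] step(2) unfolding T_def by (simp add: add.commute)
  have interval: "{n..K} = insert n {Suc n..K}"
    using step(2) by auto
  have IH: "(\<Sum>k\<in>{Suc n..K}. w k * sqrt (real k + 1)) \<le> b * T + B / b"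
    using step(3) unfolding T_def b_def by (simp add: add.commute)
  have "(b - a) * T * (b * b) \<le> (b - a) * B"
    using \<open>(real n + 2) * T \<le> B\<close> \<open>b * b = real n + 2\<close> \<open>a \<le> b\<close>
    by (metis mult.commute mult.left_commute mult_left_mono diff_ge_0_iff_ge)
  then have "(b - a) * T \<le> (b - a) * B / (b * b)"
    using \<open>0 < a\<close> \<open>a \<le> b\<close> by (simp add: field_simps)
  also have "\<dots> \<le> (b - a) * B / (a * b)"
    using \<open>0 < a\<close> \<open>a \<le> b\<close> \<open>B \<ge> 0\<close>
    by (intro divide_left_mono mult_right_mono mult_nonneg_nonneg) auto
  also have "\<dots> = B / a - B / b"
    using \<open>0 < a\<close> \<open>a \<le> b\<close> by (simp add: field_simps)
  finally have "(b - a) * T \<le> B / a - B / b" .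
  with IH have "(\<Sum>k\<in>{n..K}. w k * sqrt (real k + 1)) \<le> a * (w n + T) + B / a"
    unfolding interval a_def by (simp add: algebra_simps)
  then show ?case
    unfolding interval T_def a_def by simp
qed

lemma sum_sqrt_weighted_tail_le:
  fixes w :: "nat \<Rightarrow> real"
  assumes "B \<ge> 0"
    and tail_le: "\<And>m. m \<le> K \<Longrightarrow> (real m + 1) * (\<Sum>k\<in>{m..K}. w k) \<le> B"
    and "j \<le> K"
  shows "(\<Sum>k\<in>{j..K}. w k * sqrt (real k + 1)) \<le> 2 * B / sqrt (real j + 1)"
proof -
  define a where "a = sqrt (real j + 1)"
  have "0 < a" "a * a = real j + 1"
    unfolding a_def by simp_all
  have "a * a * (\<Sum>k\<in>{j..K}. w k) \<le> B"
    using tail_le[OF \<open>j \<le> K\<close>] by (simp only: \<open>a * a = real j + 1\<close>)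
  then have "a * (\<Sum>k\<in>{j..K}. w k) \<le> B / a"
    using \<open>0 < a\<close> by (simp add: pos_le_divide_eq mult_ac)
  then show ?thesis
    using sum_sqrt_weighted_tail_le'[OF assms] unfolding a_def[symmetric] by simp
qed

lemma discrete_weighted_hardy:
  fixes w a :: "nat \<Rightarrow> real"
  assumes "\<And>k. w k \<ge> 0" "B \<ge> 0"
    and "\<And>m. m \<le> K \<Longrightarrow> (real m + 1) * (\<Sum>k\<in>{m..K}. w k) \<le> B"
  shows "(\<Sum>k\<le>K. w k * (\<Sum>j\<le>k. a j)\<^sup>2) \<le> 4 * B * (\<Sum>j\<le>K. (a j)\<^sup>2)"
proof -
  define s where "s j = sqrt (real j + 1)" for j
  have "(\<Sum>k\<le>K. w k * (\<Sum>j\<le>k. a j)\<^sup>2)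
      \<le> (\<Sum>k\<le>K. w k * (2 * s k * (\<Sum>j\<le>k. (a j)\<^sup>2 * s j)))"
    unfolding s_def by (intro sum_mono mult_left_mono square_sum_le_sqrt_weighted assms)
  also have "\<dots> = 2 * (\<Sum>j\<le>K. (a j)\<^sup>2 * s j * (\<Sum>k\<in>{j..K}. w k * s k))"
    by (simp add: sum_atMost_nested_swap sum_distrib_left sum_distrib_right mult_ac)
  also have "\<dots> \<le> 2 * (\<Sum>j\<le>K. (a j)\<^sup>2 * s j * (2 * B / s j))"
    unfolding s_def by (intro mult_left_mono sum_mono sum_sqrt_weighted_tail_le assms) auto
  also have "\<dots> = 4 * B * (\<Sum>j\<le>K. (a j)\<^sup>2)"
    by (simp add: s_def sum_distrib_left mult_ac)
  finally show ?thesis .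
qed

section \<open>Square-summable sequences\<close>

definition vanishes_outside :: "nat set \<Rightarrow> (nat \<Rightarrow> complex) \<Rightarrow> bool" where
  "vanishes_outside A f \<longleftrightarrow> (\<forall>k. k \<notin> A \<longrightarrow> f k = 0)"

lemma vanishes_outside_scale:
  "vanishes_outside A f \<Longrightarrow> vanishes_outside A (\<lambda>k. c * f k)"
  by (simp add: vanishes_outside_def)

lemma l2_summable: "f \<in> l2 \<Longrightarrow> summable (\<lambda>k. (cmod (f k))\<^sup>2)"
  by (simp add: l2_def)

lemma l2_sumsq_nonneg: "f \<in> l2 \<Longrightarrow> 0 \<le> (\<Sum>k. (cmod (f k))\<^sup>2)"
  by (simp add: l2_summable suminf_nonneg)

lemma l2norm_nonneg: "f \<in> l2 \<Longrightarrow> 0 \<le> l2norm f"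
  by (simp add: l2norm_def l2_sumsq_nonneg)

lemma l2norm_sq: "f \<in> l2 \<Longrightarrow> (l2norm f)\<^sup>2 = (\<Sum>k. (cmod (f k))\<^sup>2)"
  by (simp add: l2norm_def l2_sumsq_nonneg)

lemma l2enorm_l2: "f \<in> l2 \<Longrightarrow> l2enorm f = ennreal (l2norm f)"
  by (simp add: l2enorm_def)

lemma l2_tail_summable: "f \<in> l2 \<Longrightarrow> summable (\<lambda>k. (cmod (f (k + m)))\<^sup>2)"
  using summable_iff_shift[of "\<lambda>k. (cmod (f k))\<^sup>2" m] by (simp add: l2_def)

lemma l2_tail_nonneg: "f \<in> l2 \<Longrightarrow> 0 \<le> (\<Sum>k. (cmod (f (k + m)))\<^sup>2)"
  by (simp add: l2_tail_summable suminf_nonneg)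

lemma sum_sq_le_l2_sumsq:
  "f \<in> l2 \<Longrightarrow> finite A \<Longrightarrow> (\<Sum>k\<in>A. (cmod (f k))\<^sup>2) \<le> (\<Sum>k. (cmod (f k))\<^sup>2)"
  by (intro sum_le_suminf l2_summable) auto

lemma sum_sq_le_l2_tail:
  assumes "f \<in> l2" "finite A" "A \<subseteq> {m..}"
  shows "(\<Sum>k\<in>A. (cmod (f k))\<^sup>2) \<le> (\<Sum>k. (cmod (f (k + m)))\<^sup>2)"
proof -
  have "inj_on (\<lambda>k. k - m) A"
    using assms(3) unfolding inj_on_def subset_eq atLeast_iff by (metis le_add_diff_inverse2)
  then have "(\<Sum>i\<in>(\<lambda>k. k - m) ` A. (cmod (f (i + m)))\<^sup>2) = (\<Sum>k\<in>A. (cmod (f (k - m + m)))\<^sup>2)"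
    by (simp add: sum.reindex)
  also have "\<dots> = (\<Sum>k\<in>A. (cmod (f k))\<^sup>2)"
    using assms(3) by (intro sum.cong) auto
  finally have "(\<Sum>k\<in>A. (cmod (f k))\<^sup>2) = (\<Sum>i\<in>(\<lambda>k. k - m) ` A. (cmod (f (i + m)))\<^sup>2)" ..
  also have "\<dots> \<le> (\<Sum>k. (cmod (f (k + m)))\<^sup>2)"
    using assms(2) by (intro sum_le_suminf l2_tail_summable assms(1)) auto
  finally show ?thesis .
qed

lemma norm_le_l2norm: "f \<in> l2 \<Longrightarrow> cmod (f j) \<le> l2norm f"
  using sum_sq_le_l2_sumsq[of f "{j}"] real_sqrt_le_mono by (fastforce simp: l2norm_def)

lemma summable_bounded_partial_sums:
  fixes h :: "nat \<Rightarrow> real"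
  assumes "\<And>k. h k \<ge> 0" and partial_le: "\<And>N. (\<Sum>k\<le>N. h k) \<le> B"
  shows "summable h" "suminf h \<le> B"
proof -
  show "summable h"
    by (rule bounded_imp_summable[OF assms])
  have "(\<Sum>k<N. h k) \<le> B" for N
    using partial_le[of "N - 1"] partial_le[of 0] assms(1)[of 0]
    by (cases N) (auto simp: lessThan_Suc_atMost)
  then show "suminf h \<le> B"
    using \<open>summable h\<close> suminf_le_const by blast
qed

lemma l2_if_vanishes_outside:
  assumes "finite A" "vanishes_outside A f"
  shows "f \<in> l2" "(\<Sum>k. (cmod (f k))\<^sup>2) = (\<Sum>k\<in>A. (cmod (f k))\<^sup>2)"
proof -
  have "(\<lambda>k. (cmod (f k))\<^sup>2) sums (\<Sum>k\<in>A. (cmod (f k))\<^sup>2)"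
    using assms by (intro sums_finite) (auto simp: vanishes_outside_def)
  then show "f \<in> l2" "(\<Sum>k. (cmod (f k))\<^sup>2) = (\<Sum>k\<in>A. (cmod (f k))\<^sup>2)"
    by (auto simp: l2_def sums_iff)
qed

lemma norm_add_sq_le:
  fixes a b :: "'a::real_normed_vector"
  shows "(norm (a + b))\<^sup>2 \<le> 2 * (norm a)\<^sup>2 + 2 * (norm b)\<^sup>2"
proof -
  have "(norm (a + b))\<^sup>2 \<le> (norm a + norm b)\<^sup>2"
    by (intro power_mono norm_triangle_ineq) auto
  also have "\<dots> = 2 * (norm a)\<^sup>2 + 2 * (norm b)\<^sup>2 - (norm a - norm b)\<^sup>2"
    by (simp add: power2_eq_square algebra_simps)
  finally show ?thesis
    using zero_le_power2[of "norm a - norm b"] by linarith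
qed

lemma norm_diff_sq_le:
  fixes a b :: "'a::real_normed_vector"
  shows "(norm (a - b))\<^sup>2 \<le> 2 * (norm a)\<^sup>2 + 2 * (norm b)\<^sup>2"
  using norm_add_sq_le[of a "- b"] by simp

lemma l2_dominated:
  assumes "f \<in> l2" "c \<ge> 0" and dominated: "\<And>k. cmod (g k) \<le> c * cmod (f k)"
  shows "g \<in> l2" "(\<Sum>k. (cmod (g k))\<^sup>2) \<le> c\<^sup>2 * (\<Sum>k. (cmod (f k))\<^sup>2)"
proof -
  have pointwise: "(cmod (g k))\<^sup>2 \<le> c\<^sup>2 * (cmod (f k))\<^sup>2" for k
    using dominated[of k] by (metis norm_ge_zero power_mono power_mult_distrib)
  have summable_f: "summable (\<lambda>k. c\<^sup>2 * (cmod (f k))\<^sup>2)"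
    using assms(1) by (intro summable_mult l2_summable)
  have "summable (\<lambda>k. (cmod (g k))\<^sup>2)"
    by (rule summable_comparison_test[OF _ summable_f]) (use pointwise in auto)
  then show "g \<in> l2"
    by (simp add: l2_def)
  have "(\<Sum>k. (cmod (g k))\<^sup>2) \<le> (\<Sum>k. c\<^sup>2 * (cmod (f k))\<^sup>2)"
    by (intro suminf_le pointwise summable_f \<open>summable (\<lambda>k. (cmod (g k))\<^sup>2)\<close>)
  also have "\<dots> = c\<^sup>2 * (\<Sum>k. (cmod (f k))\<^sup>2)"
    using assms(1) by (simp add: suminf_mult l2_summable)
  finally show "(\<Sum>k. (cmod (g k))\<^sup>2) \<le> c\<^sup>2 * (\<Sum>k. (cmod (f k))\<^sup>2)" .
qed

lemma l2_sumsq_le_twice: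
  assumes "f \<in> l2" "g \<in> l2"
    and pointwise: "\<And>k. (cmod (d k))\<^sup>2 \<le> 2 * (cmod (f k))\<^sup>2 + 2 * (cmod (g k))\<^sup>2"
  shows "d \<in> l2"
    "(\<Sum>k. (cmod (d k))\<^sup>2) \<le> 2 * (\<Sum>k. (cmod (f k))\<^sup>2) + 2 * (\<Sum>k. (cmod (g k))\<^sup>2)"
proof -
  have summable_fg: "summable (\<lambda>k. 2 * (cmod (f k))\<^sup>2 + 2 * (cmod (g k))\<^sup>2)"
    using assms by (intro summable_add summable_mult l2_summable)
  have "summable (\<lambda>k. (cmod (d k))\<^sup>2)"
    by (rule summable_comparison_test[OF _ summable_fg]) (use pointwise in auto)
  then show "d \<in> l2"
    by (simp add: l2_def)
  have "(\<Sum>k. (cmod (d k))\<^sup>2) \<le> (\<Sum>k. 2 * (cmod (f k))\<^sup>2 + 2 * (cmod (g k))\<^sup>2)"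
    by (intro suminf_le pointwise summable_fg \<open>summable (\<lambda>k. (cmod (d k))\<^sup>2)\<close>)
  also have "\<dots> = 2 * (\<Sum>k. (cmod (f k))\<^sup>2) + 2 * (\<Sum>k. (cmod (g k))\<^sup>2)"
    using assms by (simp add: suminf_add[symmetric] suminf_mult l2_summable)
  finally show "(\<Sum>k. (cmod (d k))\<^sup>2) \<le> 2 * (\<Sum>k. (cmod (f k))\<^sup>2) + 2 * (\<Sum>k. (cmod (g k))\<^sup>2)" .
qed

lemma l2_add: "f \<in> l2 \<Longrightarrow> g \<in> l2 \<Longrightarrow> (\<lambda>k. f k + g k) \<in> l2"
  by (rule l2_sumsq_le_twice(1)[OF _ _ norm_add_sq_le])

lemma l2_scale: "f \<in> l2 \<Longrightarrow> (\<lambda>k. c * f k) \<in> l2"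
  by (rule l2_dominated(1)[of f "cmod c"]) (auto simp: norm_mult)

lemma l2_diff: "f \<in> l2 \<Longrightarrow> g \<in> l2 \<Longrightarrow> (\<lambda>k. f k - g k) \<in> l2"
  using l2_add[OF _ l2_scale[of g "- 1"], of f] by simp

lemma l2norm_scale: "f \<in> l2 \<Longrightarrow> l2norm (\<lambda>k. c * f k) = cmod c * l2norm f"
  by (simp add: l2norm_def norm_mult power_mult_distrib suminf_mult l2_summable real_sqrt_mult)

lemma l2_sum:
  fixes N :: nat
  assumes "\<And>i. u i \<in> l2"
  shows "(\<lambda>k. \<Sum>i<N. c i * u i k) \<in> l2"
proof (induction N)
  case 0
  then show ?case by (simp add: l2_def)
next
  case (Suc N)
  then show ?case by (simp add: l2_add l2_scale assms)
qed

section \<open>The quantities J_n\<close>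

lemma decseq_J:
  assumes "\<alpha> \<in> l2"
  shows "decseq (J \<alpha>)"
  unfolding decseq_Suc_iff J_def
proof (intro allI SUP_least)
  fix n m
  assume "m \<in> {Suc n..}"
  then have "ennreal (sqrt (real (m + 1 - Suc n)) * sqrt (\<Sum>k. (cmod (\<alpha> (k + m)))\<^sup>2))
      \<le> ennreal (sqrt (real (m + 1 - n)) * sqrt (\<Sum>k. (cmod (\<alpha> (k + m)))\<^sup>2))"
    using l2_tail_nonneg[OF assms, of m] by (intro ennreal_leI mult_right_mono) auto
  also have "\<dots> \<le> (SUP m\<in>{n..}. ennreal (sqrt (real (m + 1 - n)) * sqrt (\<Sum>k. (cmod (\<alpha> (k + m)))\<^sup>2)))"
    using \<open>m \<in> {Suc n..}\<close> by (intro SUP_upper) auto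
  finally show "ennreal (sqrt (real (m + 1 - Suc n)) * sqrt (\<Sum>k. (cmod (\<alpha> (k + m)))\<^sup>2))
      \<le> (SUP m\<in>{n..}. ennreal (sqrt (real (m + 1 - n)) * sqrt (\<Sum>k. (cmod (\<alpha> (k + m)))\<^sup>2)))" .
qed

lemma
  assumes "\<alpha> \<in> l2"
  shows J_tendsto_lim: "J \<alpha> \<longlonglongrightarrow> lim (J \<alpha>)"
    and convergent_J: "convergent (J \<alpha>)"
    and lim_J_le: "lim (J \<alpha>) \<le> J \<alpha> n"
proof -
  have "J \<alpha> \<longlonglongrightarrow> (INF n. J \<alpha> n)"
    by (rule LIMSEQ_INF[OF decseq_J[OF assms]])
  then show "J \<alpha> \<longlonglongrightarrow> lim (J \<alpha>)" "convergent (J \<alpha>)" "lim (J \<alpha>) \<le> J \<alpha> n"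
    by (auto simp: limI convergent_def INF_lower)
qed

lemma weighted_tail_le_J_sq:
  assumes "\<alpha> \<in> l2" "J \<alpha> n \<noteq> \<infinity>" "n \<le> m"
  shows "real (m + 1 - n) * (\<Sum>k. (cmod (\<alpha> (k + m)))\<^sup>2) \<le> (enn2real (J \<alpha> n))\<^sup>2"
proof -
  define t where "t = (\<Sum>k. (cmod (\<alpha> (k + m)))\<^sup>2)"
  define x where "x = sqrt (real (m + 1 - n)) * sqrt t"
  have "t \<ge> 0" "x \<ge> 0"
    unfolding x_def t_def using l2_tail_nonneg[OF assms(1)] by auto
  have "ennreal x \<le> J \<alpha> n"
    unfolding J_def x_def t_def using assms(3) by (intro SUP_upper) auto
  then have "x \<le> enn2real (J \<alpha> n)"
    using assms(2) \<open>x \<ge> 0\<close> enn2real_mono[of "ennreal x" "J \<alpha> n"] by (simp add: top.not_eq_extremum)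
  then have "x\<^sup>2 \<le> (enn2real (J \<alpha> n))\<^sup>2"
    using \<open>x \<ge> 0\<close> by (intro power_mono) auto
  then show ?thesis
    using \<open>t \<ge> 0\<close> unfolding x_def t_def by (simp add: power_mult_distrib)
qed

lemma window_weight_le_J_sq:
  assumes "\<alpha> \<in> l2" "J \<alpha> n \<noteq> \<infinity>"
  shows "(real m + 1) * (\<Sum>k\<in>{m..K}. (cmod (\<alpha> (k + n)))\<^sup>2) \<le> (enn2real (J \<alpha> n))\<^sup>2"
proof -
  have "(\<Sum>k\<in>{m..K}. (cmod (\<alpha> (k + n)))\<^sup>2) = (\<Sum>k\<in>{m+n..K+n}. (cmod (\<alpha> k))\<^sup>2)"
    using sum.shift_bounds_cl_nat_ivl[of "\<lambda>k. (cmod (\<alpha> k))\<^sup>2" m n K] by simp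
  also have "\<dots> \<le> (\<Sum>k. (cmod (\<alpha> (k + (m + n))))\<^sup>2)"
    by (rule sum_sq_le_l2_tail[OF assms(1)]) auto
  finally have "(real m + 1) * (\<Sum>k\<in>{m..K}. (cmod (\<alpha> (k + n)))\<^sup>2)
      \<le> (real m + 1) * (\<Sum>k. (cmod (\<alpha> (k + (m + n))))\<^sup>2)"
    by (intro mult_left_mono) auto
  also have "\<dots> = real (m + n + 1 - n) * (\<Sum>k. (cmod (\<alpha> (k + (m + n))))\<^sup>2)"
    by simp
  also have "\<dots> \<le> (enn2real (J \<alpha> n))\<^sup>2"
    by (rule weighted_tail_le_J_sq[OF assms]) simp
  finally show ?thesis .
qed

section \<open>Splitting the Rhaly operator\<close>

definition rhaly_head :: "(nat \<Rightarrow> complex) \<Rightarrow> nat \<Rightarrow> (nat \<Rightarrow> complex) \<Rightarrow> nat \<Rightarrow> complex" where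
  "rhaly_head \<alpha> n f = (\<lambda>k. \<alpha> k * (\<Sum>j\<in>{..k} \<inter> {..<n}. f j))"

definition rhaly_tail :: "(nat \<Rightarrow> complex) \<Rightarrow> nat \<Rightarrow> (nat \<Rightarrow> complex) \<Rightarrow> nat \<Rightarrow> complex" where
  "rhaly_tail \<alpha> n f = (\<lambda>k. \<alpha> k * (\<Sum>j\<in>{n..k}. f j))"

lemma rhaly_eq_head_plus_tail: "rhaly \<alpha> f k = rhaly_head \<alpha> n f k + rhaly_tail \<alpha> n f k"
proof -
  have "(\<Sum>j\<le>k. f j) = (\<Sum>j\<in>({..k} \<inter> {..<n}) \<union> {n..k}. f j)"
    by (rule sum.cong) auto
  also have "\<dots> = (\<Sum>j\<in>{..k} \<inter> {..<n}. f j) + (\<Sum>j\<in>{n..k}. f j)"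
    by (rule sum.union_disjoint) auto
  finally show ?thesis
    by (simp add: rhaly_def rhaly_head_def rhaly_tail_def distrib_left)
qed

lemma rhaly_scale: "rhaly \<alpha> (\<lambda>k. c * f k) = (\<lambda>k. c * rhaly \<alpha> f k)"
  by (auto simp: rhaly_def sum_distrib_left mult_ac)

lemma rhaly_add: "rhaly \<alpha> (\<lambda>k. f k + g k) = (\<lambda>k. rhaly \<alpha> f k + rhaly \<alpha> g k)"
  by (auto simp: rhaly_def sum.distrib distrib_left)

lemma rhaly_diff: "rhaly \<alpha> (\<lambda>k. f k - g k) = (\<lambda>k. rhaly \<alpha> f k - rhaly \<alpha> g k)"
  by (auto simp: rhaly_def sum_subtractf right_diff_distrib)

lemma rhaly_sum: "rhaly \<alpha> (\<lambda>k. \<Sum>i<N. c i * u i k) = (\<lambda>k. \<Sum>i<N. c i * rhaly \<alpha> (u i) k)"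
  by (auto simp: rhaly_def sum_distrib_left sum.swap[of _ "{..<N}"] mult_ac)

lemma norm_rhaly_head_le: "cmod (rhaly_head \<alpha> n f k) \<le> (\<Sum>j<n. cmod (f j)) * cmod (\<alpha> k)"
proof -
  have "cmod (\<Sum>j\<in>{..k} \<inter> {..<n}. f j) \<le> (\<Sum>j\<in>{..k} \<inter> {..<n}. cmod (f j))"
    by (rule norm_sum)
  also have "\<dots> \<le> (\<Sum>j<n. cmod (f j))"
    by (intro sum_mono2) auto
  finally show ?thesis
    by (simp add: rhaly_head_def norm_mult mult_left_mono mult.commute)
qed

lemma rhaly_head_l2:
  assumes "\<alpha> \<in> l2"
  shows "rhaly_head \<alpha> n f \<in> l2"
    "(\<Sum>k. (cmod (rhaly_head \<alpha> n f k))\<^sup>2) \<le> (\<Sum>j<n. cmod (f j))\<^sup>2 * (\<Sum>k. (cmod (\<alpha> k))\<^sup>2)"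
  using l2_dominated[OF assms _ norm_rhaly_head_le[of \<alpha> n f]] by (simp_all add: sum_nonneg)

lemma l2norm_rhaly_head_le:
  assumes "\<alpha> \<in> l2" "f \<in> l2"
  shows "l2norm (rhaly_head \<alpha> n f) \<le> sqrt (real n) * l2norm \<alpha> * l2norm f"
proof (rule power2_le_imp_le)
  have "(\<Sum>j<n. cmod (f j))\<^sup>2 \<le> real n * (\<Sum>j<n. (cmod (f j))\<^sup>2)"
    using sum_squared_le_sum_of_squares[of "\<lambda>j. cmod (f j)" "{..<n}"] by (simp add: mult.commute)
  also have "\<dots> \<le> real n * (l2norm f)\<^sup>2"
    unfolding l2norm_sq[OF assms(2)] by (intro mult_left_mono sum_sq_le_l2_sumsq assms) auto
  finally have partial_sum: "(\<Sum>j<n. cmod (f j))\<^sup>2 \<le> real n * (l2norm f)\<^sup>2" .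
  have "(l2norm (rhaly_head \<alpha> n f))\<^sup>2 = (\<Sum>k. (cmod (rhaly_head \<alpha> n f k))\<^sup>2)"
    by (rule l2norm_sq[OF rhaly_head_l2(1)[OF assms(1)]])
  also have "\<dots> \<le> (\<Sum>j<n. cmod (f j))\<^sup>2 * (l2norm \<alpha>)\<^sup>2"
    unfolding l2norm_sq[OF assms(1)] by (rule rhaly_head_l2(2)[OF assms(1)])
  also have "\<dots> \<le> real n * (l2norm f)\<^sup>2 * (l2norm \<alpha>)\<^sup>2"
    by (intro mult_right_mono partial_sum) simp
  also have "\<dots> = (sqrt (real n) * l2norm \<alpha> * l2norm f)\<^sup>2"
    by (simp add: power_mult_distrib)
  finally show "(l2norm (rhaly_head \<alpha> n f))\<^sup>2 \<le> (sqrt (real n) * l2norm \<alpha> * l2norm f)\<^sup>2" .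
  show "0 \<le> sqrt (real n) * l2norm \<alpha> * l2norm f"
    by (simp add: l2norm_nonneg assms)
qed

lemma rhaly_head_expansion:
  assumes "\<alpha> \<in> l2"
  shows "\<exists>v \<phi>. (\<forall>i<Suc n. v i \<in> l2) \<and> (\<forall>f. rhaly_head \<alpha> n f = (\<lambda>k. \<Sum>i<Suc n. \<phi> i f * v i k))"
proof -
  define v where "v i = (if i < n then (\<lambda>k. if k = i then 1 else 0) else (\<lambda>k. if n \<le> k then \<alpha> k else 0))"
    for i
  define \<phi> where "\<phi> i f = (if i < n then \<alpha> i * (\<Sum>j\<le>i. f j) else (\<Sum>j<n. f j))"
    for i and f :: "nat \<Rightarrow> complex"
  have "v i \<in> l2" for i
  proof (cases "i < n")
    case True
    then show ?thesis
      unfolding v_def using l2_if_vanishes_outside(1)[of "{i}"] by (auto simp: vanishes_outside_def)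
  next
    case False
    then show ?thesis
      unfolding v_def by (intro l2_dominated(1)[OF assms, of 1]) auto
  qed
  moreover have "rhaly_head \<alpha> n f k = (\<Sum>i<Suc n. \<phi> i f * v i k)" for f k
  proof -
    have "(\<Sum>i<n. \<phi> i f * v i k) = (if k < n then \<phi> k f else 0)"
      unfolding v_def by (simp add: if_distrib cong: if_cong)
    moreover have "{..k} \<inter> {..<n} = (if k < n then {..k} else {..<n})"
      by auto
    ultimately show ?thesis
      by (simp add: rhaly_head_def \<phi>_def v_def)
  qed
  ultimately show ?thesis
    by blast
qed

lemma finite_rank_rhaly_head:
  assumes "\<alpha> \<in> l2"
  shows "finite_rank_op (rhaly_head \<alpha> n)"
  unfolding finite_rank_op_def
proof (intro conjI)
  show "\<forall>f\<in>l2. rhaly_head \<alpha> n f \<in> l2"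
    using rhaly_head_l2(1)[OF assms] by blast
  show "\<forall>f\<in>l2. \<forall>g\<in>l2. rhaly_head \<alpha> n (\<lambda>k. f k + g k) = (\<lambda>k. rhaly_head \<alpha> n f k + rhaly_head \<alpha> n g k)"
    by (simp add: rhaly_head_def sum.distrib distrib_left)
  show "\<forall>f\<in>l2. \<forall>c. rhaly_head \<alpha> n (\<lambda>k. c * f k) = (\<lambda>k. c * rhaly_head \<alpha> n f k)"
    by (simp add: rhaly_head_def sum_distrib_left mult_ac)
  show "\<exists>C. \<forall>f\<in>l2. l2norm (rhaly_head \<alpha> n f) \<le> C * l2norm f"
    using l2norm_rhaly_head_le[OF assms] by blast
  show "\<exists>(m::nat) v \<phi>. (\<forall>i<m. v i \<in> l2) \<and> (\<forall>f\<in>l2. rhaly_head \<alpha> n f = (\<lambda>k. \<Sum>i<m. \<phi> i f * v i k))"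
  proof -
    obtain v \<phi> where "\<forall>i<Suc n. v i \<in> l2" "\<forall>f. rhaly_head \<alpha> n f = (\<lambda>k. \<Sum>i<Suc n. \<phi> i f * v i k)"
      using rhaly_head_expansion[OF assms] by blast
    then show ?thesis
      by (intro exI[of _ "Suc n"] exI[of _ v] exI[of _ \<phi>]) simp
  qed
qed

lemma rhaly_tail_partial_sums_le:
  assumes "\<alpha> \<in> l2" "J \<alpha> n \<noteq> \<infinity>" "f \<in> l2"
  shows "(\<Sum>k\<le>N. (cmod (rhaly_tail \<alpha> n f k))\<^sup>2) \<le> 4 * (enn2real (J \<alpha> n))\<^sup>2 * (\<Sum>k. (cmod (f k))\<^sup>2)"
proof -
  define w where "w i = (cmod (\<alpha> (i + n)))\<^sup>2" for i
  define a where "a j = cmod (f (j + n))" for j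
  have "(\<Sum>k\<le>N. (cmod (rhaly_tail \<alpha> n f k))\<^sup>2) \<le> (\<Sum>k\<le>N + n. (cmod (rhaly_tail \<alpha> n f k))\<^sup>2)"
    by (intro sum_mono2) auto
  also have "\<dots> = (\<Sum>k\<in>{n..N + n}. (cmod (rhaly_tail \<alpha> n f k))\<^sup>2)"
    by (intro sum.mono_neutral_right) (auto simp: rhaly_tail_def)
  also have "\<dots> = (\<Sum>i\<le>N. (cmod (rhaly_tail \<alpha> n f (i + n)))\<^sup>2)"
    using sum.shift_bounds_cl_nat_ivl[of "\<lambda>k. (cmod (rhaly_tail \<alpha> n f k))\<^sup>2" 0 n N]
    by (simp add: atMost_atLeast0)
  also have "\<dots> \<le> (\<Sum>i\<le>N. w i * (\<Sum>j\<le>i. a j)\<^sup>2)"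
  proof (intro sum_mono)
    fix i
    have "rhaly_tail \<alpha> n f (i + n) = \<alpha> (i + n) * (\<Sum>j\<le>i. f (j + n))"
      using sum.shift_bounds_cl_nat_ivl[of f 0 n i] by (simp add: rhaly_tail_def atMost_atLeast0)
    then have "cmod (rhaly_tail \<alpha> n f (i + n)) \<le> cmod (\<alpha> (i + n)) * (\<Sum>j\<le>i. a j)"
      unfolding a_def by (simp add: norm_mult mult_left_mono norm_sum)
    then show "(cmod (rhaly_tail \<alpha> n f (i + n)))\<^sup>2 \<le> w i * (\<Sum>j\<le>i. a j)\<^sup>2"
      unfolding w_def by (metis norm_ge_zero power_mono power_mult_distrib)
  qed
  also have "\<dots> \<le> 4 * (enn2real (J \<alpha> n))\<^sup>2 * (\<Sum>j\<le>N. (a j)\<^sup>2)"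
    by (rule discrete_weighted_hardy) (auto simp: w_def window_weight_le_J_sq[OF assms(1,2)])
  also have "\<dots> \<le> 4 * (enn2real (J \<alpha> n))\<^sup>2 * (\<Sum>k. (cmod (f k))\<^sup>2)"
  proof (intro mult_left_mono)
    have "(\<Sum>j\<le>N. (a j)\<^sup>2) = (\<Sum>k\<in>(\<lambda>j. j + n) ` {..N}. (cmod (f k))\<^sup>2)"
      by (simp add: a_def sum.reindex)
    also have "\<dots> \<le> (\<Sum>k. (cmod (f k))\<^sup>2)"
      by (intro sum_sq_le_l2_sumsq assms) auto
    finally show "(\<Sum>j\<le>N. (a j)\<^sup>2) \<le> (\<Sum>k. (cmod (f k))\<^sup>2)" .
  qed simp
  finally show ?thesis .
qed

lemma
  assumes "\<alpha> \<in> l2" "J \<alpha> n \<noteq> \<infinity>" "f \<in> l2"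
  shows rhaly_tail_l2: "rhaly_tail \<alpha> n f \<in> l2"
    and rhaly_tail_sumsq_le:
      "(\<Sum>k. (cmod (rhaly_tail \<alpha> n f k))\<^sup>2) \<le> 4 * (enn2real (J \<alpha> n))\<^sup>2 * (\<Sum>k. (cmod (f k))\<^sup>2)"
  using summable_bounded_partial_sums[OF _ rhaly_tail_partial_sums_le[OF assms]]
  by (auto simp: l2_def)

lemma l2norm_rhaly_tail_le:
  assumes "\<alpha> \<in> l2" "J \<alpha> n \<noteq> \<infinity>" "f \<in> l2"
  shows "l2norm (rhaly_tail \<alpha> n f) \<le> 2 * enn2real (J \<alpha> n) * l2norm f"
proof (rule power2_le_imp_le)
  show "(l2norm (rhaly_tail \<alpha> n f))\<^sup>2 \<le> (2 * enn2real (J \<alpha> n) * l2norm f)\<^sup>2"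
    using rhaly_tail_sumsq_le[OF assms] l2norm_sq[OF rhaly_tail_l2[OF assms]] l2norm_sq[OF assms(3)]
    by (simp add: power_mult_distrib)
  show "0 \<le> 2 * enn2real (J \<alpha> n) * l2norm f"
    by (simp add: l2norm_nonneg assms)
qed

lemma rhaly_l2:
  assumes "\<alpha> \<in> l2" "J \<alpha> n \<noteq> \<infinity>" "f \<in> l2"
  shows "rhaly \<alpha> f \<in> l2"
proof -
  have "rhaly \<alpha> f = (\<lambda>k. rhaly_head \<alpha> n f k + rhaly_tail \<alpha> n f k)"
    by (rule ext) (rule rhaly_eq_head_plus_tail)
  then show ?thesis
    using l2_add[OF rhaly_head_l2(1)[OF assms(1)] rhaly_tail_l2[OF assms]] by simp
qed

section \<open>The upper bound\<close>

lemma opnorm_le: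
  assumes "\<And>f. f \<in> l2 \<Longrightarrow> l2norm f \<le> 1 \<Longrightarrow> T f \<in> l2 \<and> l2norm (T f) \<le> C"
  shows "opnorm T \<le> ennreal C"
  unfolding opnorm_def by (rule SUP_least) (use assms in \<open>auto simp: l2enorm_l2 intro: ennreal_leI\<close>)

lemma opnorm_rhaly_minus_head_le:
  assumes "\<alpha> \<in> l2"
  shows "opnorm (\<lambda>f k. rhaly \<alpha> f k - rhaly_head \<alpha> n f k) \<le> ennreal 2 * J \<alpha> n"
proof (cases "J \<alpha> n = \<infinity>")
  case True
  then show ?thesis by (simp add: ennreal_mult_top)
next
  case False
  have tail: "(\<lambda>k. rhaly \<alpha> f k - rhaly_head \<alpha> n f k) = rhaly_tail \<alpha> n f" for f
    by (rule ext) (simp add: rhaly_eq_head_plus_tail[of \<alpha> f _ n])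
  have "opnorm (\<lambda>f k. rhaly \<alpha> f k - rhaly_head \<alpha> n f k) \<le> ennreal (2 * enn2real (J \<alpha> n))"
  proof (rule opnorm_le)
    fix f
    assume "f \<in> l2" "l2norm f \<le> 1"
    then show "(\<lambda>k. rhaly \<alpha> f k - rhaly_head \<alpha> n f k) \<in> l2
      \<and> l2norm (\<lambda>k. rhaly \<alpha> f k - rhaly_head \<alpha> n f k) \<le> 2 * enn2real (J \<alpha> n)"
      using rhaly_tail_l2[OF assms False] l2norm_rhaly_tail_le[OF assms False, of f]
        mult_left_mono[of "l2norm f" 1 "2 * enn2real (J \<alpha> n)"]
      by (simp add: tail)
  qed
  also have "\<dots> = ennreal 2 * J \<alpha> n"
    using False by (simp add: ennreal_mult top.not_eq_extremum)
  finally show ?thesis .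
qed

lemma ess_norm_rhaly_le:
  assumes "\<alpha> \<in> l2"
  shows "ess_norm (rhaly \<alpha>) \<le> ennreal 2 * lim (J \<alpha>)"
proof (rule LIMSEQ_le_const)
  show "(\<lambda>n. ennreal 2 * J \<alpha> n) \<longlonglongrightarrow> ennreal 2 * lim (J \<alpha>)"
    by (intro ennreal_tendsto_cmult J_tendsto_lim assms) simp
  have "ess_norm (rhaly \<alpha>) \<le> ennreal 2 * J \<alpha> n" for n
  proof -
    have "ess_norm (rhaly \<alpha>) \<le> opnorm (\<lambda>f k. rhaly \<alpha> f k - rhaly_head \<alpha> n f k)"
      unfolding ess_norm_def using finite_rank_rhaly_head[OF assms, of n] by (intro INF_lower) auto
    also have "\<dots> \<le> ennreal 2 * J \<alpha> n"
      by (rule opnorm_rhaly_minus_head_le[OF assms])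
    finally show ?thesis .
  qed
  then show "\<exists>N. \<forall>n\<ge>N. ess_norm (rhaly \<alpha>) \<le> ennreal 2 * J \<alpha> n"
    by blast
qed

section \<open>The lower bound\<close>

lemma homogeneous_system_pivot:
  fixes A :: "'l \<Rightarrow> nat \<Rightarrow> 'a::field"
  assumes "A l0 M \<noteq> 0"
    and reduced: "l \<noteq> l0 \<Longrightarrow> (\<Sum>i<M. d i * (A l i - A l M * A l0 i / A l0 M)) = 0"
  shows "(\<Sum>i<Suc M. (if i < M then d i else - (\<Sum>i<M. d i * A l0 i) / A l0 M) * A l i) = 0"
    (is "(\<Sum>i<Suc M. ?c i * A l i) = 0")
proof -
  define s where "s = (\<Sum>i<M. d i * A l0 i)"
  have "(\<Sum>i<M. ?c i * A l i) = (\<Sum>i<M. d i * A l i)"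
    by (intro sum.cong) auto
  then have row: "(\<Sum>i<Suc M. ?c i * A l i) = (\<Sum>i<M. d i * A l i) - s * A l M / A l0 M"
    by (simp add: s_def)
  show ?thesis
  proof (cases "l = l0")
    case True
    then show ?thesis
      using row \<open>A l0 M \<noteq> 0\<close> unfolding s_def by simp
  next
    case False
    have "(\<Sum>i<M. d i * (A l i - A l M * A l0 i / A l0 M)) = (\<Sum>i<M. d i * A l i) - s * A l M / A l0 M"
      unfolding s_def by (simp add: algebra_simps sum_subtractf sum_distrib_left sum_divide_distrib)
    then show ?thesis
      using row reduced[OF False] by simp
  qed
qed

lemma homogeneous_system_nontrivial_solution:
  fixes A :: "'l \<Rightarrow> nat \<Rightarrow> 'a::field"
  assumes "finite L" "card L < M"
  shows "\<exists>c. (\<exists>i<M. c i \<noteq> 0) \<and> (\<forall>l\<in>L. (\<Sum>i<M. c i * A l i) = 0)"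
  using assms
proof (induction M arbitrary: L A)
  case 0
  then show ?case by simp
next
  case (Suc M)
  show ?case
  proof (cases "\<forall>l\<in>L. A l M = 0")
    case True
    show ?thesis
      by (rule exI[where x="\<lambda>i. if i = M then 1 else 0"]) (use True in auto)
  next
    case False
    then obtain l0 where "l0 \<in> L" "A l0 M \<noteq> 0"
      by auto
    have "finite (L - {l0})" "card (L - {l0}) < M"
      using Suc.prems \<open>l0 \<in> L\<close> card_gt_0_iff[of L] by (auto simp: card_Diff_singleton)
    from Suc.IH[OF this, of "\<lambda>l i. A l i - A l M * A l0 i / A l0 M"]
    obtain d where "\<exists>i<M. d i \<noteq> 0"
      and "\<forall>l\<in>L - {l0}. (\<Sum>i<M. d i * (A l i - A l M * A l0 i / A l0 M)) = 0"
      by blast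
    define c where "c i = (if i < M then d i else - (\<Sum>i<M. d i * A l0 i) / A l0 M)" for i
    have "(\<Sum>i<Suc M. c i * A l i) = 0" if "l \<in> L" for l
      unfolding c_def using \<open>\<forall>l\<in>L - {l0}. _\<close> that
      by (intro homogeneous_system_pivot \<open>A l0 M \<noteq> 0\<close>) auto
    moreover have "\<exists>i<Suc M. c i \<noteq> 0"
      using \<open>\<exists>i<M. d i \<noteq> 0\<close> by (auto simp: c_def)
    ultimately show ?thesis
      by blast
  qed
qed

lemma
  assumes "finite_rank_op P"
  shows finite_rank_op_add: "f \<in> l2 \<Longrightarrow> g \<in> l2 \<Longrightarrow> P (\<lambda>k. f k + g k) = (\<lambda>k. P f k + P g k)"
    and finite_rank_op_scale: "f \<in> l2 \<Longrightarrow> P (\<lambda>k. c * f k) = (\<lambda>k. c * P f k)"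
  using assms unfolding finite_rank_op_def by blast+

lemma finite_rank_op_expansion:
  assumes "finite_rank_op P"
  obtains n :: nat and v \<phi> where "\<And>f. f \<in> l2 \<Longrightarrow> P f = (\<lambda>k. \<Sum>i<n. \<phi> i f * v i k)"
proof -
  from assms have "\<exists>(n::nat) v \<phi>. \<forall>f\<in>l2. P f = (\<lambda>k. \<Sum>i<n. \<phi> i f * v i k)"
    unfolding finite_rank_op_def by (elim conjE exE) (intro exI, assumption)
  then show ?thesis
    using that by blast
qed

lemma finite_rank_op_sum:
  fixes N :: nat
  assumes "finite_rank_op P" "\<And>i. u i \<in> l2"
  shows "P (\<lambda>k. \<Sum>i<N. c i * u i k) = (\<lambda>k. \<Sum>i<N. c i * P (u i) k)"
proof (induction N)
  case 0
  have "(\<lambda>k. 0) \<in> l2"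
    by (simp add: l2_def)
  from finite_rank_op_scale[OF assms(1) this, of 0] show ?case
    by simp
next
  case (Suc N)
  have "(\<lambda>k. \<Sum>i<N. c i * u i k) \<in> l2" "u N \<in> l2"
    by (simp_all add: l2_sum assms(2))
  then show ?case
    using finite_rank_op_add[OF assms(1) _ l2_scale] finite_rank_op_scale[OF assms(1)]
    by (simp add: Suc.IH)
qed

lemma finite_rank_op_annihilates_combination:
  fixes u :: "nat \<Rightarrow> nat \<Rightarrow> complex"
  assumes "finite_rank_op P" "\<And>i. u i \<in> l2"
  obtains N c where "\<exists>i<N. c i \<noteq> 0" "P (\<lambda>k. \<Sum>i<N. c i * u i k) = (\<lambda>k. 0)"
proof -
  obtain n :: nat and v \<phi> where expansion: "\<And>f. f \<in> l2 \<Longrightarrow> P f = (\<lambda>k. \<Sum>l<n. \<phi> l f * v l k)"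
    using finite_rank_op_expansion[OF assms(1)] by blast
  obtain c where "\<exists>i<Suc n. c i \<noteq> 0" and c_solves: "\<forall>l\<in>{..<n}. (\<Sum>i<Suc n. c i * \<phi> l (u i)) = 0"
    using homogeneous_system_nontrivial_solution[of "{..<n}" "Suc n" "\<lambda>l i. \<phi> l (u i)"] by auto
  have "P (\<lambda>k. \<Sum>i<Suc n. c i * u i k) = (\<lambda>k. \<Sum>i<Suc n. c i * P (u i) k)"
    by (rule finite_rank_op_sum[OF assms])
  also have "\<dots> = (\<lambda>k. \<Sum>i<Suc n. c i * (\<Sum>l<n. \<phi> l (u i) * v l k))"
    using expansion assms(2) by simp
  also have "\<dots> = (\<lambda>k. \<Sum>l<n. (\<Sum>i<Suc n. c i * \<phi> l (u i)) * v l k)"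
    by (simp add: sum_distrib_left sum_distrib_right sum.swap[of _ "{..<n}"] mult_ac
        del: sum.lessThan_Suc)
  also have "\<dots> = (\<lambda>k. 0)"
    using c_solves by simp
  finally show thesis
    using that \<open>\<exists>i<Suc n. c i \<noteq> 0\<close> by blast
qed

lemma disjoint_blocks_vanish_beyond:
  fixes u :: "nat \<Rightarrow> nat \<Rightarrow> complex"
  assumes "strict_mono \<beta>" and blocks: "\<And>i. vanishes_outside {\<beta> i..<\<beta> (Suc i)} (u i)"
    and "\<beta> N \<le> k"
  shows "(\<Sum>i<N. c i * u i k) = 0"
proof (intro sum.neutral ballI)
  fix i
  assume "i \<in> {..<N}"
  then have "\<beta> (Suc i) \<le> k"
    using strict_mono_less_eq[OF assms(1), of "Suc i" N] assms(3) by auto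
  then show "c i * u i k = 0"
    using blocks[of i] by (simp add: vanishes_outside_def)
qed

lemma sum_sq_disjoint_blocks:
  fixes u :: "nat \<Rightarrow> nat \<Rightarrow> complex"
  assumes "strict_mono \<beta>" and blocks: "\<And>i. vanishes_outside {\<beta> i..<\<beta> (Suc i)} (u i)"
  shows "(\<Sum>k<\<beta> N. (cmod (\<Sum>i<N. c i * u i k))\<^sup>2)
    = (\<Sum>i<N. (cmod (c i))\<^sup>2 * (\<Sum>k<\<beta> (Suc i). (cmod (u i k))\<^sup>2))"
proof (induction N)
  case 0
  then show ?case by simp
next
  case (Suc N)
  have "\<beta> N \<le> \<beta> (Suc N)"
    using strict_mono_less_eq[OF assms(1)] by simp
  then have "(\<Sum>k<\<beta> (Suc N). (cmod (\<Sum>i<Suc N. c i * u i k))\<^sup>2)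
      = (\<Sum>k<\<beta> N. (cmod (\<Sum>i<Suc N. c i * u i k))\<^sup>2)
        + (\<Sum>k\<in>{\<beta> N..<\<beta> (Suc N)}. (cmod (\<Sum>i<Suc N. c i * u i k))\<^sup>2)"
    by (simp add: lessThan_atLeast0 sum.atLeastLessThan_concat)
  also have "(\<Sum>k<\<beta> N. (cmod (\<Sum>i<Suc N. c i * u i k))\<^sup>2) = (\<Sum>k<\<beta> N. (cmod (\<Sum>i<N. c i * u i k))\<^sup>2)"
    using blocks[of N] by (intro sum.cong) (auto simp: vanishes_outside_def)
  also have "(\<Sum>k\<in>{\<beta> N..<\<beta> (Suc N)}. (cmod (\<Sum>i<Suc N. c i * u i k))\<^sup>2)
      = (\<Sum>k\<in>{\<beta> N..<\<beta> (Suc N)}. (cmod (c N))\<^sup>2 * (cmod (u N k))\<^sup>2)"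
    using disjoint_blocks_vanish_beyond[OF assms, of N _ c]
    by (intro sum.cong) (auto simp: norm_mult power_mult_distrib)
  also have "\<dots> = (cmod (c N))\<^sup>2 * (\<Sum>k\<in>{\<beta> N..<\<beta> (Suc N)}. (cmod (u N k))\<^sup>2)"
    by (simp add: sum_distrib_left)
  also have "(\<Sum>k\<in>{\<beta> N..<\<beta> (Suc N)}. (cmod (u N k))\<^sup>2) = (\<Sum>k<\<beta> (Suc N). (cmod (u N k))\<^sup>2)"
    using blocks[of N] by (intro sum.mono_neutral_left) (auto simp: vanishes_outside_def)
  finally show ?case
    by (simp add: Suc.IH)
qed

lemma l2norm_sq_disjoint_blocks:
  fixes u :: "nat \<Rightarrow> nat \<Rightarrow> complex"
  assumes "strict_mono \<beta>" and blocks: "\<And>i. vanishes_outside {\<beta> i..<\<beta> (Suc i)} (u i)"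
  shows "(\<lambda>k. \<Sum>i<N. c i * u i k) \<in> l2"
    "(l2norm (\<lambda>k. \<Sum>i<N. c i * u i k))\<^sup>2 = (\<Sum>i<N. (cmod (c i))\<^sup>2 * (l2norm (u i))\<^sup>2)"
proof -
  have u_norm: "(l2norm (u i))\<^sup>2 = (\<Sum>k<\<beta> (Suc i). (cmod (u i k))\<^sup>2)" for i
  proof -
    have "vanishes_outside {..<\<beta> (Suc i)} (u i)"
      using blocks[of i] by (simp add: vanishes_outside_def)
    from l2_if_vanishes_outside[OF _ this] show ?thesis
      by (simp add: l2norm_sq)
  qed
  have "vanishes_outside {..<\<beta> N} (\<lambda>k. \<Sum>i<N. c i * u i k)"
    unfolding vanishes_outside_def using disjoint_blocks_vanish_beyond[OF assms] by simp
  from l2_if_vanishes_outside[OF _ this]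
  show "(\<lambda>k. \<Sum>i<N. c i * u i k) \<in> l2"
    "(l2norm (\<lambda>k. \<Sum>i<N. c i * u i k))\<^sup>2 = (\<Sum>i<N. (cmod (c i))\<^sup>2 * (l2norm (u i))\<^sup>2)"
    by (simp_all add: l2norm_sq sum_sq_disjoint_blocks[OF assms] u_norm)
qed

lemma opnorm_ge:
  assumes "g \<in> l2" "0 < l2norm g" "T g \<in> l2"
    and scale: "\<And>c. T (\<lambda>k. c * g k) = (\<lambda>k. c * T g k)"
    and "x * l2norm g \<le> l2norm (T g)"
  shows "ennreal x \<le> opnorm T"
proof -
  define s where "s = complex_of_real (1 / l2norm g)"
  have "cmod s = 1 / l2norm g"
    using assms(2) by (simp add: s_def norm_divide)
  define f where "f = (\<lambda>k. s * g k)"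
  have "f \<in> l2" "l2norm f = 1"
    using assms(1,2) \<open>cmod s = 1 / l2norm g\<close> by (simp_all add: f_def l2_scale l2norm_scale)
  have "T f = (\<lambda>k. s * T g k)"
    by (simp add: f_def scale)
  then have "T f \<in> l2" "l2norm (T f) = l2norm (T g) / l2norm g"
    using assms(3) \<open>cmod s = 1 / l2norm g\<close> by (simp_all add: l2_scale l2norm_scale)
  then have "x \<le> l2norm (T f)"
    using assms(2,5) by (simp add: pos_le_divide_eq)
  then have "ennreal x \<le> l2enorm (T f)"
    using \<open>T f \<in> l2\<close> by (simp add: l2enorm_l2 ennreal_leI)
  also have "\<dots> \<le> opnorm T"
    unfolding opnorm_def using \<open>f \<in> l2\<close> \<open>l2norm f = 1\<close> by (intro SUP_upper) auto
  finally show ?thesis .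
qed

text \<open>Test functions for the lower bound: the constant 1 on [a, m], then after a gap up to c the
  constant -p/L on (c, c + L], where p = m + 1 - a. All partial sums vanish from c + L on, so
  R_\<alpha> of it is supported on [a, c + L], while on [m, c) it equals p \<alpha>.\<close>
definition cancelling_block :: "nat \<Rightarrow> nat \<Rightarrow> nat \<Rightarrow> nat \<Rightarrow> nat \<Rightarrow> complex" where
  "cancelling_block a m c L j =
     (if a \<le> j \<and> j \<le> m then 1
      else if c < j \<and> j \<le> c + L then - of_real (real (m + 1 - a) / real L) else 0)"

lemma cancelling_block_partial_sums:
  assumes "a \<le> m" "m \<le> c" "0 < L"
  shows "k < a \<Longrightarrow> (\<Sum>j\<le>k. cancelling_block a m c L j) = 0"
    and "m \<le> k \<Longrightarrow> k \<le> c \<Longrightarrow> (\<Sum>j\<le>k. cancelling_block a m c L j) = of_nat (m + 1 - a)"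
    and "c + L \<le> k \<Longrightarrow> (\<Sum>j\<le>k. cancelling_block a m c L j) = 0"
proof -
  let ?g = "cancelling_block a m c L"
  have plateau: "(\<Sum>j\<in>{a..m}. ?g j) = of_nat (m + 1 - a)"
    by (simp add: cancelling_block_def)
  show "(\<Sum>j\<le>k. ?g j) = 0" if "k < a"
    using that assms by (intro sum.neutral) (auto simp: cancelling_block_def)
  show "(\<Sum>j\<le>k. ?g j) = of_nat (m + 1 - a)" if "m \<le> k" "k \<le> c"
  proof -
    have "(\<Sum>j\<le>k. ?g j) = (\<Sum>j\<in>{a..m}. ?g j)"
      using that by (intro sum.mono_neutral_right) (auto simp: cancelling_block_def)
    then show ?thesis
      using plateau by simp
  qed
  show "(\<Sum>j\<le>k. ?g j) = 0" if "c + L \<le> k"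
  proof -
    have "(\<Sum>j\<le>k. ?g j) = (\<Sum>j\<in>{a..m} \<union> {c<..c + L}. ?g j)"
      using that assms by (intro sum.mono_neutral_right) (auto simp: cancelling_block_def)
    also have "\<dots> = (\<Sum>j\<in>{a..m}. ?g j) + (\<Sum>j\<in>{c<..c + L}. ?g j)"
      using assms by (intro sum.union_disjoint) auto
    also have "(\<Sum>j\<in>{c<..c + L}. ?g j) = (\<Sum>j\<in>{c<..c + L}. - of_real (real (m + 1 - a) / real L))"
      using assms by (intro sum.cong) (auto simp: cancelling_block_def)
    finally show ?thesis
      using plateau assms by simp
  qed
qed

lemma vanishes_outside_cancelling_block:
  assumes "a \<le> m" "m \<le> c" "0 < L"
  shows "vanishes_outside {a..<c + L + 1} (cancelling_block a m c L)"
    and "vanishes_outside {a..<c + L + 1} (rhaly \<alpha> (cancelling_block a m c L))"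
  using assms cancelling_block_partial_sums[OF assms]
  by (auto simp: vanishes_outside_def cancelling_block_def rhaly_def)

lemma sumsq_cancelling_block:
  assumes "a \<le> m" "m \<le> c" "0 < L"
  shows "(\<Sum>k\<in>{a..<c + L + 1}. (cmod (cancelling_block a m c L k))\<^sup>2)
    = real (m + 1 - a) + (real (m + 1 - a))\<^sup>2 / real L"
proof -
  let ?g = "cancelling_block a m c L"
  have "(\<Sum>k\<in>{a..<c + L + 1}. (cmod (?g k))\<^sup>2) = (\<Sum>k\<in>{a..m} \<union> {c<..c + L}. (cmod (?g k))\<^sup>2)"
    using assms by (intro sum.mono_neutral_right) (auto simp: cancelling_block_def)
  also have "\<dots> = (\<Sum>k\<in>{a..m}. (cmod (?g k))\<^sup>2) + (\<Sum>k\<in>{c<..c + L}. (cmod (?g k))\<^sup>2)"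
    using assms by (intro sum.union_disjoint) auto
  also have "(\<Sum>k\<in>{a..m}. (cmod (?g k))\<^sup>2) = real (m + 1 - a)"
    by (simp add: cancelling_block_def)
  also have "(\<Sum>k\<in>{c<..c + L}. (cmod (?g k))\<^sup>2) = (\<Sum>k\<in>{c<..c + L}. (real (m + 1 - a) / real L)\<^sup>2)"
    using assms by (intro sum.cong) (auto simp: cancelling_block_def norm_divide simp del: of_nat_diff)
  finally show ?thesis
    using assms by (simp add: power2_eq_square)
qed

lemma sumsq_rhaly_cancelling_block_ge:
  assumes "a \<le> m" "m \<le> c" "0 < L"
  shows "(real (m + 1 - a))\<^sup>2 * (\<Sum>k\<in>{m..<c}. (cmod (\<alpha> k))\<^sup>2)
    \<le> (\<Sum>k\<in>{a..<c + L + 1}. (cmod (rhaly \<alpha> (cancelling_block a m c L) k))\<^sup>2)"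
proof -
  have "(real (m + 1 - a))\<^sup>2 * (\<Sum>k\<in>{m..<c}. (cmod (\<alpha> k))\<^sup>2)
      = (\<Sum>k\<in>{m..<c}. (cmod (rhaly \<alpha> (cancelling_block a m c L) k))\<^sup>2)"
    unfolding sum_distrib_left
    using cancelling_block_partial_sums(2)[OF assms]
    by (intro sum.cong) (auto simp: rhaly_def norm_mult power_mult_distrib)
  also have "\<dots> \<le> (\<Sum>k\<in>{a..<c + L + 1}. (cmod (rhaly \<alpha> (cancelling_block a m c L) k))\<^sup>2)"
    using assms by (intro sum_mono2) auto
  finally show ?thesis .
qed

lemma exists_heavy_window:
  assumes "\<alpha> \<in> l2" "0 \<le> x" "ennreal x < J \<alpha> a"
  shows "\<exists>m M. a \<le> m \<and> x\<^sup>2 < real (m + 1 - a) * (\<Sum>k\<in>{m..<m + M}. (cmod (\<alpha> k))\<^sup>2)"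
proof -
  obtain m where "a \<le> m"
    and "ennreal x < ennreal (sqrt (real (m + 1 - a)) * sqrt (\<Sum>k. (cmod (\<alpha> (k + m)))\<^sup>2))"
    using assms(3) unfolding J_def less_SUP_iff by auto
  then have "x < sqrt (real (m + 1 - a)) * sqrt (\<Sum>k. (cmod (\<alpha> (k + m)))\<^sup>2)"
    using assms(2) by (simp add: ennreal_less_iff)
  then have "x\<^sup>2 < (sqrt (real (m + 1 - a)) * sqrt (\<Sum>k. (cmod (\<alpha> (k + m)))\<^sup>2))\<^sup>2"
    using assms(2) by (intro power_strict_mono) auto
  then have "x\<^sup>2 < real (m + 1 - a) * (\<Sum>k. (cmod (\<alpha> (k + m)))\<^sup>2)"
    using l2_tail_nonneg[OF assms(1)] by (simp add: power_mult_distrib)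
  moreover have "(\<lambda>M. real (m + 1 - a) * (\<Sum>i<M. (cmod (\<alpha> (i + m)))\<^sup>2))
      \<longlonglongrightarrow> real (m + 1 - a) * (\<Sum>k. (cmod (\<alpha> (k + m)))\<^sup>2)"
    by (intro tendsto_mult_left summable_LIMSEQ l2_tail_summable assms(1))
  ultimately have "\<forall>\<^sub>F M in sequentially. x\<^sup>2 < real (m + 1 - a) * (\<Sum>i<M. (cmod (\<alpha> (i + m)))\<^sup>2)"
    by (simp add: order_tendstoD(1))
  then obtain M where "x\<^sup>2 < real (m + 1 - a) * (\<Sum>i<M. (cmod (\<alpha> (i + m)))\<^sup>2)"
    unfolding eventually_sequentially by force
  moreover have "(\<Sum>i<M. (cmod (\<alpha> (i + m)))\<^sup>2) = (\<Sum>k\<in>{m..<m + M}. (cmod (\<alpha> k))\<^sup>2)"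
    using sum.shift_bounds_nat_ivl[of "\<lambda>k. (cmod (\<alpha> k))\<^sup>2" 0 m M]
    by (simp add: atLeast0LessThan add.commute)
  ultimately have "x\<^sup>2 < real (m + 1 - a) * (\<Sum>k\<in>{m..<m + M}. (cmod (\<alpha> k))\<^sup>2)"
    by (simp del: of_nat_diff)
  then show ?thesis
    using \<open>a \<le> m\<close> by blast
qed

lemma normalize_test_function:
  assumes "finite A" "vanishes_outside A g" "vanishes_outside A (rhaly \<alpha> g)"
    and "0 < l2norm g" "x * l2norm g \<le> l2norm (rhaly \<alpha> g)"
  shows "\<exists>G. vanishes_outside A G \<and> vanishes_outside A (rhaly \<alpha> G)
    \<and> l2norm G = 1 \<and> x \<le> l2norm (rhaly \<alpha> G)"
proof -
  define s where "s = complex_of_real (1 / l2norm g)"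
  have "cmod s = 1 / l2norm g"
    using assms(4) by (simp add: s_def norm_divide)
  have "g \<in> l2" "rhaly \<alpha> g \<in> l2"
    using l2_if_vanishes_outside(1) assms(1-3) by auto
  have "l2norm (\<lambda>k. s * g k) = 1" "x \<le> l2norm (rhaly \<alpha> (\<lambda>k. s * g k))"
    using assms(4,5) \<open>cmod s = 1 / l2norm g\<close> \<open>g \<in> l2\<close> \<open>rhaly \<alpha> g \<in> l2\<close>
    by (simp_all add: l2norm_scale rhaly_scale pos_le_divide_eq)
  then show ?thesis
    using assms(2,3) by (intro exI[of _ "\<lambda>k. s * g k"]) (simp add: rhaly_scale vanishes_outside_scale)
qed

text \<open>A long enough negative plateau makes its own contribution p^2 / L to the squared norm
  negligible.\<close>
lemma exists_cancelling_length:
  fixes x p A :: real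
  assumes "1 \<le> p" "x\<^sup>2 < p * A"
  obtains L :: nat where "0 < L" "x\<^sup>2 * (p + p\<^sup>2 / real L) \<le> p\<^sup>2 * A"
proof -
  define L where "L = nat \<lceil>x\<^sup>2 * p / (p * A - x\<^sup>2)\<rceil> + 1"
  have "0 < L" "0 < p * A - x\<^sup>2"
    using assms(2) by (simp_all add: L_def)
  have "x\<^sup>2 * p / (p * A - x\<^sup>2) \<le> real (nat \<lceil>x\<^sup>2 * p / (p * A - x\<^sup>2)\<rceil>)"
    by (rule real_nat_ceiling_ge)
  then have "x\<^sup>2 * p / (p * A - x\<^sup>2) \<le> real L"
    unfolding L_def by simp
  then have "x\<^sup>2 * p \<le> real L * (p * A - x\<^sup>2)"
    using \<open>0 < p * A - x\<^sup>2\<close> by (simp add: pos_divide_le_eq)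
  then have "x\<^sup>2 * p / real L \<le> p * A - x\<^sup>2"
    using \<open>0 < L\<close> by (simp add: pos_divide_le_eq mult.commute)
  then have "p * (x\<^sup>2 + x\<^sup>2 * p / real L) \<le> p * (p * A)"
    using assms(1) by (intro mult_left_mono) simp_all
  moreover have "x\<^sup>2 * (p + p\<^sup>2 / real L) = p * (x\<^sup>2 + x\<^sup>2 * p / real L)"
    by (simp add: power2_eq_square ring_distribs mult_ac)
  ultimately show thesis
    using that \<open>0 < L\<close> by (simp add: power2_eq_square mult_ac)
qed

lemma exists_test_block:
  assumes "\<alpha> \<in> l2" "0 \<le> x" "ennreal x < J \<alpha> a"
  obtains b G where "a < b" "vanishes_outside {a..<b} G" "vanishes_outside {a..<b} (rhaly \<alpha> G)"
    "l2norm G = 1" "x \<le> l2norm (rhaly \<alpha> G)"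
proof -
  obtain m M where "a \<le> m"
    and heavy: "x\<^sup>2 < real (m + 1 - a) * (\<Sum>k\<in>{m..<m + M}. (cmod (\<alpha> k))\<^sup>2)"
    using exists_heavy_window[OF assms] by blast
  define p where "p = real (m + 1 - a)"
  define A where "A = (\<Sum>k\<in>{m..<m + M}. (cmod (\<alpha> k))\<^sup>2)"
  have "p \<ge> 1" "x\<^sup>2 < p * A"
    using \<open>a \<le> m\<close> heavy unfolding p_def A_def by simp_all
  then obtain L where "0 < L" and ratio: "x\<^sup>2 * (p + p\<^sup>2 / real L) \<le> p\<^sup>2 * A"
    by (rule exists_cancelling_length)
  define g where "g = cancelling_block a m (m + M) L"
  define b where "b = m + M + L + 1"
  have supp: "vanishes_outside {a..<b} g" "vanishes_outside {a..<b} (rhaly \<alpha> g)"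
    unfolding g_def b_def using vanishes_outside_cancelling_block[OF \<open>a \<le> m\<close> le_add1 \<open>0 < L\<close>] by simp_all
  have "g \<in> l2" "rhaly \<alpha> g \<in> l2"
    using l2_if_vanishes_outside(1)[OF _ supp(1)] l2_if_vanishes_outside(1)[OF _ supp(2)] by simp_all
  have "(l2norm g)\<^sup>2 = (\<Sum>k\<in>{a..<b}. (cmod (g k))\<^sup>2)"
    using l2_if_vanishes_outside(2)[OF _ supp(1)] l2norm_sq[OF \<open>g \<in> l2\<close>] by simp
  also have "\<dots> = p + p\<^sup>2 / real L"
    unfolding g_def b_def p_def by (rule sumsq_cancelling_block[OF \<open>a \<le> m\<close> le_add1 \<open>0 < L\<close>])
  finally have "(l2norm g)\<^sup>2 = p + p\<^sup>2 / real L" .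
  have "p\<^sup>2 * A \<le> (\<Sum>k\<in>{a..<b}. (cmod (rhaly \<alpha> g k))\<^sup>2)"
    unfolding g_def b_def p_def A_def by (rule sumsq_rhaly_cancelling_block_ge[OF \<open>a \<le> m\<close> le_add1 \<open>0 < L\<close>])
  also have "\<dots> = (l2norm (rhaly \<alpha> g))\<^sup>2"
    using l2_if_vanishes_outside(2)[OF _ supp(2)] l2norm_sq[OF \<open>rhaly \<alpha> g \<in> l2\<close>] by simp
  finally have "p\<^sup>2 * A \<le> (l2norm (rhaly \<alpha> g))\<^sup>2" .
  have "0 < (l2norm g)\<^sup>2"
    using \<open>(l2norm g)\<^sup>2 = p + p\<^sup>2 / real L\<close> \<open>p \<ge> 1\<close> by (simp add: add_pos_nonneg)
  then have "0 < l2norm g"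
    using l2norm_nonneg[OF \<open>g \<in> l2\<close>] by (auto simp: order_less_le)
  moreover have "x * l2norm g \<le> l2norm (rhaly \<alpha> g)"
  proof (rule power2_le_imp_le)
    show "(x * l2norm g)\<^sup>2 \<le> (l2norm (rhaly \<alpha> g))\<^sup>2"
      using ratio \<open>(l2norm g)\<^sup>2 = p + p\<^sup>2 / real L\<close> \<open>p\<^sup>2 * A \<le> (l2norm (rhaly \<alpha> g))\<^sup>2\<close>
      by (simp add: power_mult_distrib)
    show "0 \<le> l2norm (rhaly \<alpha> g)"
      by (rule l2norm_nonneg[OF \<open>rhaly \<alpha> g \<in> l2\<close>])
  qed
  ultimately obtain G where "vanishes_outside {a..<b} G" "vanishes_outside {a..<b} (rhaly \<alpha> G)"
    "l2norm G = 1" "x \<le> l2norm (rhaly \<alpha> G)"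
    using normalize_test_function[OF _ supp] by blast
  moreover have "a < b"
    using \<open>a \<le> m\<close> by (simp add: b_def)
  ultimately show thesis
    using that by blast
qed

lemma exists_test_block_sequence:
  assumes "\<alpha> \<in> l2" "0 \<le> x" "\<And>a. ennreal x < J \<alpha> a"
  obtains \<beta> G where "strict_mono \<beta>"
    "\<And>i. vanishes_outside {\<beta> i..<\<beta> (Suc i)} (G i)"
    "\<And>i. vanishes_outside {\<beta> i..<\<beta> (Suc i)} (rhaly \<alpha> (G i))"
    "\<And>i. l2norm (G i) = 1" "\<And>i. x \<le> l2norm (rhaly \<alpha> (G i))"
proof -
  define test where "test a b G \<longleftrightarrow> a < b
    \<and> vanishes_outside {a..<b} G \<and> vanishes_outside {a..<b} (rhaly \<alpha> G)
    \<and> l2norm G = 1 \<and> x \<le> l2norm (rhaly \<alpha> G)" for a b G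
  have "\<exists>b G. test a b G" for a
  proof -
    obtain b G where "a < b" "vanishes_outside {a..<b} G" "vanishes_outside {a..<b} (rhaly \<alpha> G)"
      "l2norm G = 1" "x \<le> l2norm (rhaly \<alpha> G)"
      by (rule exists_test_block[OF assms(1,2) assms(3)])
    then have "test a b G"
      by (simp add: test_def)
    then show ?thesis
      by blast
  qed
  then obtain next_end where "\<forall>a. \<exists>G. test a (next_end a) G"
    using choice[of "\<lambda>a b. \<exists>G. test a b G"] by auto
  then obtain block where blocks: "\<And>a. test a (next_end a) (block a)"
    using choice[of "\<lambda>a G. test a (next_end a) G"] by blast
  define \<beta> where "\<beta> = rec_nat 0 (\<lambda>_. next_end)"
  have "\<beta> (Suc i) = next_end (\<beta> i)" for i
    by (simp add: \<beta>_def)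
  then show thesis
    using blocks unfolding test_def by (intro that[of \<beta> "\<lambda>i. block (\<beta> i)"]) (simp_all add: strict_mono_Suc_iff)
qed

lemma rhaly_disjoint_blocks_combination_ge:
  assumes "0 \<le> x" "strict_mono \<beta>"
    and blocks: "\<And>i. vanishes_outside {\<beta> i..<\<beta> (Suc i)} (G i)"
    and rhaly_blocks: "\<And>i. vanishes_outside {\<beta> i..<\<beta> (Suc i)} (rhaly \<alpha> (G i))"
    and "\<And>i. l2norm (G i) = 1" "\<And>i. x \<le> l2norm (rhaly \<alpha> (G i))"
    and "\<exists>i<N. c i \<noteq> 0"
  defines "g \<equiv> \<lambda>k. \<Sum>i<N. c i * G i k"
  shows "g \<in> l2" "rhaly \<alpha> g \<in> l2" "0 < l2norm g" "x * l2norm g \<le> l2norm (rhaly \<alpha> g)"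
proof -
  have "g \<in> l2" "(l2norm g)\<^sup>2 = (\<Sum>i<N. (cmod (c i))\<^sup>2 * (l2norm (G i))\<^sup>2)"
    unfolding g_def by (rule l2norm_sq_disjoint_blocks[OF \<open>strict_mono \<beta>\<close> blocks])+
  then show "g \<in> l2"
    by simp
  have norm_g: "(l2norm g)\<^sup>2 = (\<Sum>i<N. (cmod (c i))\<^sup>2)"
    using \<open>(l2norm g)\<^sup>2 = _\<close> by (simp add: \<open>\<And>i. l2norm (G i) = 1\<close>)
  have rhaly_g: "rhaly \<alpha> g = (\<lambda>k. \<Sum>i<N. c i * rhaly \<alpha> (G i) k)"
    by (simp add: g_def rhaly_sum)
  have "rhaly \<alpha> g \<in> l2"
    "(l2norm (rhaly \<alpha> g))\<^sup>2 = (\<Sum>i<N. (cmod (c i))\<^sup>2 * (l2norm (rhaly \<alpha> (G i)))\<^sup>2)"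
    unfolding rhaly_g by (rule l2norm_sq_disjoint_blocks[OF \<open>strict_mono \<beta>\<close> rhaly_blocks])+
  then show "rhaly \<alpha> g \<in> l2"
    by simp
  obtain i0 where "i0 < N" "c i0 \<noteq> 0"
    using \<open>\<exists>i<N. c i \<noteq> 0\<close> by blast
  then have "0 < (\<Sum>i<N. (cmod (c i))\<^sup>2)"
    by (intro sum_pos2[of "{..<N}" i0]) auto
  then show "0 < l2norm g"
    using norm_g l2norm_nonneg[OF \<open>g \<in> l2\<close>] by (auto simp: order_less_le)
  have "(l2norm g)\<^sup>2 * x\<^sup>2 = (\<Sum>i<N. (cmod (c i))\<^sup>2 * x\<^sup>2)"
    unfolding norm_g by (rule sum_distrib_right)
  also have "\<dots> \<le> (\<Sum>i<N. (cmod (c i))\<^sup>2 * (l2norm (rhaly \<alpha> (G i)))\<^sup>2)"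
    using \<open>0 \<le> x\<close> \<open>\<And>i. x \<le> l2norm (rhaly \<alpha> (G i))\<close>
    by (intro sum_mono mult_left_mono power_mono) simp_all
  also have "\<dots> = (l2norm (rhaly \<alpha> g))\<^sup>2"
    by (rule sym) fact
  finally have "(x * l2norm g)\<^sup>2 \<le> (l2norm (rhaly \<alpha> g))\<^sup>2"
    by (simp only: power_mult_distrib mult.commute)
  then show "x * l2norm g \<le> l2norm (rhaly \<alpha> g)"
    using l2norm_nonneg[OF \<open>rhaly \<alpha> g \<in> l2\<close>] by (rule power2_le_imp_le)
qed

text \<open>The test blocks and their images are orthogonal, so the unit combination killed by P
  still satisfies the lower bound.\<close>
lemma opnorm_rhaly_minus_finite_rank_ge_blocks:
  assumes "finite_rank_op P" "0 \<le> x" "strict_mono \<beta>"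
    and blocks: "\<And>i. vanishes_outside {\<beta> i..<\<beta> (Suc i)} (G i)"
    and rhaly_blocks: "\<And>i. vanishes_outside {\<beta> i..<\<beta> (Suc i)} (rhaly \<alpha> (G i))"
    and "\<And>i. l2norm (G i) = 1" "\<And>i. x \<le> l2norm (rhaly \<alpha> (G i))"
  shows "ennreal x \<le> opnorm (\<lambda>f k. rhaly \<alpha> f k - P f k)"
proof -
  have "G i \<in> l2" for i
    using l2_if_vanishes_outside(1)[OF _ blocks] by simp
  then obtain N c where "\<exists>i<N. c i \<noteq> 0" and killed: "P (\<lambda>k. \<Sum>i<N. c i * G i k) = (\<lambda>k. 0)"
    by (rule finite_rank_op_annihilates_combination[OF assms(1)])
  define g where "g = (\<lambda>k. \<Sum>i<N. c i * G i k)"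
  note combination = rhaly_disjoint_blocks_combination_ge[OF assms(2-7) \<open>\<exists>i<N. c i \<noteq> 0\<close>,
      folded g_def]
  have killed_g: "(\<lambda>k. rhaly \<alpha> g k - P g k) = rhaly \<alpha> g"
    using killed by (simp add: g_def)
  show ?thesis
  proof (rule opnorm_ge[OF combination(1,3)])
    show "(\<lambda>k. rhaly \<alpha> g k - P g k) \<in> l2"
      using killed_g combination(2) by simp
    show "(\<lambda>k. rhaly \<alpha> (\<lambda>k. s * g k) k - P (\<lambda>k. s * g k) k) = (\<lambda>k. s * (rhaly \<alpha> g k - P g k))" for s
      using finite_rank_op_scale[OF assms(1) combination(1), of s] by (simp add: rhaly_scale right_diff_distrib)
    show "x * l2norm g \<le> l2norm (\<lambda>k. rhaly \<alpha> g k - P g k)"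
      using killed_g combination(4) by simp
  qed
qed

lemma opnorm_rhaly_minus_finite_rank_ge:
  assumes "\<alpha> \<in> l2" "finite_rank_op P"
  shows "lim (J \<alpha>) \<le> opnorm (\<lambda>f k. rhaly \<alpha> f k - P f k)"
proof (rule dense_le)
  fix y
  assume "y < lim (J \<alpha>)"
  define x where "x = enn2real y"
  have "y < top"
    using \<open>y < lim (J \<alpha>)\<close> top_greatest by (rule order.strict_trans2)
  then have "0 \<le> x" "y = ennreal x"
    by (simp_all add: x_def)
  have below_J: "ennreal x < J \<alpha> a" for a
    using less_le_trans[OF \<open>y < lim (J \<alpha>)\<close> lim_J_le[OF assms(1)]] \<open>y = ennreal x\<close> by simp
  show "y \<le> opnorm (\<lambda>f k. rhaly \<alpha> f k - P f k)"
    unfolding \<open>y = ennreal x\<close>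
    by (rule exists_test_block_sequence[OF assms(1) \<open>0 \<le> x\<close> below_J],
        rule opnorm_rhaly_minus_finite_rank_ge_blocks[OF assms(2) \<open>0 \<le> x\<close>])
qed

lemma ess_norm_rhaly_ge:
  assumes "\<alpha> \<in> l2"
  shows "lim (J \<alpha>) \<le> ess_norm (rhaly \<alpha>)"
  unfolding ess_norm_def by (rule INF_greatest) (simp add: opnorm_rhaly_minus_finite_rank_ge[OF assms])

section \<open>Compactness\<close>

text \<open>An l2 limit would have to keep mass x in arbitrarily far tails.\<close>
lemma not_l2_tendsto_escaping_windows:
  assumes "h \<in> l2" "0 < x"
    and windows: "\<And>n. vanishes_outside {b n..<c n} (d n)"
    and mass: "\<And>n. x \<le> l2norm (d n)"
    and "filterlim b at_top sequentially"
  shows "\<not> (\<lambda>n. l2norm (\<lambda>k. d n k - h k)) \<longlonglongrightarrow> 0"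
proof
  assume tendsto: "(\<lambda>n. l2norm (\<lambda>k. d n k - h k)) \<longlonglongrightarrow> 0"
  obtain N0 where tail: "\<And>m. N0 \<le> m \<Longrightarrow> norm (\<Sum>k. (cmod (h (k + m)))\<^sup>2) < x\<^sup>2 / 4"
    using suminf_exist_split[OF _ l2_summable[OF assms(1)], of "x\<^sup>2 / 4"] \<open>0 < x\<close> by auto
  have "\<forall>\<^sub>F n in sequentially. N0 \<le> b n \<and> l2norm (\<lambda>k. d n k - h k) < x / 2"
    using assms(5) order_tendstoD(2)[OF tendsto, of "x / 2"] \<open>0 < x\<close>
    by (auto simp: filterlim_at_top intro: eventually_conj)
  then obtain n where "N0 \<le> b n" and close: "l2norm (\<lambda>k. d n k - h k) < x / 2"
    unfolding eventually_sequentially by (metis order_refl)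
  define W where "W = {b n..<c n}"
  have "d n \<in> l2" "(l2norm (d n))\<^sup>2 = (\<Sum>k\<in>W. (cmod (d n k))\<^sup>2)"
    using l2_if_vanishes_outside[OF _ windows[of n]] by (simp_all add: W_def l2norm_sq)
  have "(\<lambda>k. d n k - h k) \<in> l2"
    by (rule l2_diff[OF \<open>d n \<in> l2\<close> assms(1)])
  have "x\<^sup>2 \<le> (l2norm (d n))\<^sup>2"
    using mass[of n] \<open>0 < x\<close> by (intro power_mono) auto
  also have "\<dots> \<le> (\<Sum>k\<in>W. 2 * (cmod (d n k - h k))\<^sup>2 + 2 * (cmod (h k))\<^sup>2)"
    unfolding \<open>(l2norm (d n))\<^sup>2 = _\<close>
  proof (intro sum_mono)
    fix k
    show "(cmod (d n k))\<^sup>2 \<le> 2 * (cmod (d n k - h k))\<^sup>2 + 2 * (cmod (h k))\<^sup>2"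
      using norm_add_sq_le[of "d n k - h k" "h k"] by simp
  qed
  also have "\<dots> = 2 * (\<Sum>k\<in>W. (cmod (d n k - h k))\<^sup>2) + 2 * (\<Sum>k\<in>W. (cmod (h k))\<^sup>2)"
    by (simp add: sum.distrib sum_distrib_left)
  also have "\<dots> \<le> 2 * (l2norm (\<lambda>k. d n k - h k))\<^sup>2 + 2 * (\<Sum>k. (cmod (h (k + b n)))\<^sup>2)"
    using sum_sq_le_l2_sumsq[OF \<open>(\<lambda>k. d n k - h k) \<in> l2\<close>, of W]
      sum_sq_le_l2_tail[OF assms(1), of W "b n"]
    by (simp add: W_def l2norm_sq[OF \<open>(\<lambda>k. d n k - h k) \<in> l2\<close>] subset_eq)
  also have "\<dots> < 2 * (x / 2)\<^sup>2 + 2 * (x\<^sup>2 / 4)"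
    using close tail[OF \<open>N0 \<le> b n\<close>] l2norm_nonneg[OF \<open>(\<lambda>k. d n k - h k) \<in> l2\<close>]
    by (intro add_less_le_mono mult_strict_left_mono power_strict_mono) auto
  finally show False
    by (simp add: power_divide)
qed

lemma not_compact_rhaly_of_test_blocks:
  assumes "0 < x" "strict_mono \<beta>"
    and blocks: "\<And>i. vanishes_outside {\<beta> i..<\<beta> (Suc i)} (G i)"
    and rhaly_blocks: "\<And>i. vanishes_outside {\<beta> i..<\<beta> (Suc i)} (rhaly \<alpha> (G i))"
    and "\<And>i. l2norm (G i) = 1" "\<And>i. x \<le> l2norm (rhaly \<alpha> (G i))"
  shows "\<not> compact_op (rhaly \<alpha>)"
proof
  assume "compact_op (rhaly \<alpha>)"
  moreover have "\<forall>n. G n \<in> l2" "\<exists>C. \<forall>n. l2norm (G n) \<le> C"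
    using l2_if_vanishes_outside(1)[OF _ blocks] \<open>\<And>i. l2norm (G i) = 1\<close> by auto
  ultimately obtain r h where "strict_mono r" "h \<in> l2"
    and tendsto: "(\<lambda>n. l2norm (\<lambda>k. rhaly \<alpha> (G (r n)) k - h k)) \<longlonglongrightarrow> 0"
    unfolding compact_op_def by blast
  have "filterlim (\<lambda>n. \<beta> (r n)) at_top sequentially"
    using filterlim_subseq[OF strict_mono_o[OF \<open>strict_mono \<beta>\<close> \<open>strict_mono r\<close>]] by (simp add: o_def)
  from not_l2_tendsto_escaping_windows[OF \<open>h \<in> l2\<close> \<open>0 < x\<close> rhaly_blocks _ this] tendsto
  show False
    using \<open>\<And>i. x \<le> l2norm (rhaly \<alpha> (G i))\<close> by blast
qed

lemma compact_rhaly_imp_lim_J_zero: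
  assumes "\<alpha> \<in> l2" "compact_op (rhaly \<alpha>)"
  shows "lim (J \<alpha>) = 0"
proof (rule ccontr)
  assume "lim (J \<alpha>) \<noteq> 0"
  then have "0 < lim (J \<alpha>)"
    using not_gr_zero by blast
  then obtain y where "0 < y" "y < lim (J \<alpha>)"
    using dense by blast
  define x where "x = enn2real y"
  have "y < top"
    using \<open>y < lim (J \<alpha>)\<close> top_greatest by (rule order.strict_trans2)
  then have "0 < x" "y = ennreal x"
    using \<open>0 < y\<close> by (simp_all add: x_def enn2real_positive_iff)
  have below_J: "ennreal x < J \<alpha> a" for a
    using less_le_trans[OF \<open>y < lim (J \<alpha>)\<close> lim_J_le[OF assms(1)]] \<open>y = ennreal x\<close> by simp
  have "\<not> compact_op (rhaly \<alpha>)"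
    by (rule exists_test_block_sequence[OF assms(1) less_imp_le[OF \<open>0 < x\<close>] below_J],
        rule not_compact_rhaly_of_test_blocks[OF \<open>0 < x\<close>])
  with assms(2) show False
    by contradiction
qed

lemma exists_subseq_convergent_coordinates:
  fixes fs :: "nat \<Rightarrow> nat \<Rightarrow> complex"
  assumes "\<And>n j. cmod (fs n j) \<le> C"
  obtains r where "strict_mono r" "\<And>j. convergent (\<lambda>i. fs (r i) j)"
proof -
  interpret diagonal: subseqs "\<lambda>j s. convergent (\<lambda>i. fs (s i) j)"
  proof
    fix j and s :: "nat \<Rightarrow> nat"
    have "bounded (range (\<lambda>i. fs (s i) j))"
      unfolding bounded_iff using assms by auto
    from bounded_imp_convergent_subsequence[OF this] obtain l r where
      "strict_mono r" "((\<lambda>i. fs (s i) j) \<circ> r) \<longlonglongrightarrow> l"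
      by blast
    then show "\<exists>r. strict_mono r \<and> convergent (\<lambda>i. fs ((s \<circ> r) i) j)"
      unfolding convergent_def by (auto simp: o_def)
  qed
  have "convergent (\<lambda>i. fs (diagonal.diagseq i) j)" for j
  proof -
    have "convergent (\<lambda>i. fs ((diagonal.diagseq \<circ> (+) (Suc j)) i) j)"
    proof (rule diagonal.diagseq_holds)
      fix r s n
      assume "strict_mono (r :: nat \<Rightarrow> nat)" "convergent (\<lambda>i. fs (s i) n)"
      from convergent_subseq_convergent[OF this(2) this(1)]
      show "convergent (\<lambda>i. fs ((s \<circ> r) i) n)"
        by (simp add: o_def)
    qed
    then obtain l where "(\<lambda>i. fs (diagonal.diagseq (i + Suc j)) j) \<longlonglongrightarrow> l"
      unfolding convergent_def by (auto simp: o_def add.commute)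
    then have "(\<lambda>i. fs (diagonal.diagseq i) j) \<longlonglongrightarrow> l"
      by (rule LIMSEQ_offset)
    then show ?thesis
      unfolding convergent_def by blast
  qed
  then show thesis
    using that diagonal.subseq_diagseq by blast
qed

lemma l2_coordinatewise_limit:
  assumes "\<And>n. fs n \<in> l2" "\<And>n. l2norm (fs n) \<le> C" and coordinates: "\<And>j. (\<lambda>n. fs n j) \<longlonglongrightarrow> h j"
  shows "h \<in> l2" "(\<Sum>k. (cmod (h k))\<^sup>2) \<le> C\<^sup>2"
proof -
  have "(\<Sum>j\<le>N. (cmod (h j))\<^sup>2) \<le> C\<^sup>2" for N
  proof (rule LIMSEQ_le_const2)
    show "(\<lambda>n. \<Sum>j\<le>N. (cmod (fs n j))\<^sup>2) \<longlonglongrightarrow> (\<Sum>j\<le>N. (cmod (h j))\<^sup>2)"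
      by (intro tendsto_intros coordinates)
    have "(\<Sum>j\<le>N. (cmod (fs n j))\<^sup>2) \<le> C\<^sup>2" for n
    proof -
      have "(\<Sum>j\<le>N. (cmod (fs n j))\<^sup>2) \<le> (l2norm (fs n))\<^sup>2"
        using sum_sq_le_l2_sumsq[OF assms(1), of "{..N}" n] by (simp add: l2norm_sq assms(1))
      also have "\<dots> \<le> C\<^sup>2"
        by (intro power_mono assms(2) l2norm_nonneg assms(1))
      finally show ?thesis .
    qed
    then show "\<exists>N0. \<forall>n\<ge>N0. (\<Sum>j\<le>N. (cmod (fs n j))\<^sup>2) \<le> C\<^sup>2"
      by blast
  qed
  from summable_bounded_partial_sums[of "\<lambda>k. (cmod (h k))\<^sup>2", OF _ this]
  show "h \<in> l2" "(\<Sum>k. (cmod (h k))\<^sup>2) \<le> C\<^sup>2"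
    by (simp_all add: l2_def)
qed

lemma sumsq_rhaly_le:
  assumes "\<alpha> \<in> l2" "J \<alpha> n \<noteq> \<infinity>" "f \<in> l2"
  shows "(\<Sum>k. (cmod (rhaly \<alpha> f k))\<^sup>2)
    \<le> 2 * ((\<Sum>j<n. cmod (f j))\<^sup>2 * (\<Sum>k. (cmod (\<alpha> k))\<^sup>2))
      + 8 * (enn2real (J \<alpha> n))\<^sup>2 * (\<Sum>k. (cmod (f k))\<^sup>2)"
proof -
  have "(\<Sum>k. (cmod (rhaly \<alpha> f k))\<^sup>2)
      \<le> 2 * (\<Sum>k. (cmod (rhaly_head \<alpha> n f k))\<^sup>2) + 2 * (\<Sum>k. (cmod (rhaly_tail \<alpha> n f k))\<^sup>2)"
    by (rule l2_sumsq_le_twice(2)[OF rhaly_head_l2(1)[OF assms(1)] rhaly_tail_l2[OF assms]])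
      (simp add: rhaly_eq_head_plus_tail[of \<alpha> f _ n] norm_add_sq_le)
  then show ?thesis
    using rhaly_head_l2(2)[OF assms(1), of n f] rhaly_tail_sumsq_le[OF assms] by linarith
qed

lemma exists_J_sq_less:
  assumes "J \<alpha> \<longlonglongrightarrow> 0" "0 < \<delta>"
  obtains N where "J \<alpha> N \<noteq> \<infinity>" "(enn2real (J \<alpha> N))\<^sup>2 < \<delta>"
proof -
  obtain N where "J \<alpha> N < ennreal (sqrt \<delta>)"
    using order_tendstoD(2)[OF assms(1), of "ennreal (sqrt \<delta>)"] assms(2)
    by (auto simp: eventually_sequentially)
  then have "J \<alpha> N < top"
    using ennreal_less_top less_trans by blast
  then have "J \<alpha> N \<noteq> \<infinity>" "ennreal (enn2real (J \<alpha> N)) < ennreal (sqrt \<delta>)"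
    using \<open>J \<alpha> N < ennreal (sqrt \<delta>)\<close> by simp_all
  then have "enn2real (J \<alpha> N) < sqrt \<delta>"
    by (simp add: ennreal_less_iff)
  then have "(enn2real (J \<alpha> N))\<^sup>2 < (sqrt \<delta>)\<^sup>2"
    by (intro power_strict_mono) auto
  then have "(enn2real (J \<alpha> N))\<^sup>2 < \<delta>"
    using assms(2) by simp
  with \<open>J \<alpha> N \<noteq> \<infinity>\<close> show thesis
    by (rule that)
qed

lemma eventually_sumsq_rhaly_less:
  assumes "\<alpha> \<in> l2" "J \<alpha> N \<noteq> \<infinity>" "0 < \<eta>"
    and u: "\<And>n. u n \<in> l2" "\<And>n. (\<Sum>k. (cmod (u n k))\<^sup>2) \<le> U"
    and coordinates: "\<And>j. (\<lambda>n. u n j) \<longlonglongrightarrow> 0"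
  shows "\<forall>\<^sub>F n in sequentially. (\<Sum>k. (cmod (rhaly \<alpha> (u n) k))\<^sup>2) < \<eta> + 8 * (enn2real (J \<alpha> N))\<^sup>2 * U"
proof -
  have "(\<lambda>n. 2 * ((\<Sum>j<N. cmod (u n j))\<^sup>2 * (\<Sum>k. (cmod (\<alpha> k))\<^sup>2)))
      \<longlonglongrightarrow> 2 * ((\<Sum>j<N. cmod 0)\<^sup>2 * (\<Sum>k. (cmod (\<alpha> k))\<^sup>2))"
    by (intro tendsto_intros coordinates)
  then have "(\<lambda>n. 2 * ((\<Sum>j<N. cmod (u n j))\<^sup>2 * (\<Sum>k. (cmod (\<alpha> k))\<^sup>2))) \<longlonglongrightarrow> 0"
    by simp
  from order_tendstoD(2)[OF this assms(3)]
  show ?thesis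
  proof eventually_elim
    case (elim n)
    have "8 * (enn2real (J \<alpha> N))\<^sup>2 * (\<Sum>k. (cmod (u n k))\<^sup>2) \<le> 8 * (enn2real (J \<alpha> N))\<^sup>2 * U"
      using u(2)[of n] by (intro mult_left_mono) auto
    then show ?case
      using sumsq_rhaly_le[OF assms(1,2) u(1), of n] elim by linarith
  qed
qed

lemma rhaly_tendsto_zero:
  assumes "\<alpha> \<in> l2" "J \<alpha> \<longlonglongrightarrow> 0" and u: "\<And>n. u n \<in> l2" "\<And>n. (\<Sum>k. (cmod (u n k))\<^sup>2) \<le> U"
    and coordinates: "\<And>j. (\<lambda>n. u n j) \<longlonglongrightarrow> 0"
  shows "(\<lambda>n. l2norm (rhaly \<alpha> (u n))) \<longlonglongrightarrow> 0"
proof -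
  have "0 \<le> U"
    using l2_sumsq_nonneg[OF u(1)] u(2) order_trans by blast
  obtain N1 where "J \<alpha> N1 \<noteq> \<infinity>"
    by (rule exists_J_sq_less[OF assms(2) zero_less_one])
  have "(\<lambda>n. \<Sum>k. (cmod (rhaly \<alpha> (u n) k))\<^sup>2) \<longlonglongrightarrow> 0"
  proof (rule order_tendstoI)
    fix a :: real
    assume "a < 0"
    then show "\<forall>\<^sub>F n in sequentially. a < (\<Sum>k. (cmod (rhaly \<alpha> (u n) k))\<^sup>2)"
      using l2_sumsq_nonneg[OF rhaly_l2[OF assms(1) \<open>J \<alpha> N1 \<noteq> \<infinity>\<close> u(1)]]
      by (intro always_eventually allI) (rule less_le_trans)
  next
    fix \<epsilon> :: real
    assume "0 < \<epsilon>"
    then have "0 < \<epsilon> / (16 * (U + 1))"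
      using \<open>0 \<le> U\<close> by simp
    then obtain N where "J \<alpha> N \<noteq> \<infinity>" and small: "(enn2real (J \<alpha> N))\<^sup>2 < \<epsilon> / (16 * (U + 1))"
      by (rule exists_J_sq_less[OF assms(2)])
    have "8 * (enn2real (J \<alpha> N))\<^sup>2 * U \<le> 8 * (\<epsilon> / (16 * (U + 1))) * U"
      using small \<open>0 \<le> U\<close> by (intro mult_right_mono) auto
    also have "\<dots> \<le> \<epsilon> / 2"
      using \<open>0 < \<epsilon>\<close> \<open>0 \<le> U\<close> by (simp add: field_simps)
    finally have bound: "\<epsilon> / 2 + 8 * (enn2real (J \<alpha> N))\<^sup>2 * U \<le> \<epsilon>"
      by simp
    have "\<forall>\<^sub>F n in sequentially.
        (\<Sum>k. (cmod (rhaly \<alpha> (u n) k))\<^sup>2) < \<epsilon> / 2 + 8 * (enn2real (J \<alpha> N))\<^sup>2 * U"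
      using \<open>0 < \<epsilon>\<close> by (intro eventually_sumsq_rhaly_less[OF assms(1) \<open>J \<alpha> N \<noteq> \<infinity>\<close> _ u coordinates]) simp
    then show "\<forall>\<^sub>F n in sequentially. (\<Sum>k. (cmod (rhaly \<alpha> (u n) k))\<^sup>2) < \<epsilon>"
      by (rule eventually_mono) (use bound in linarith)
  qed
  then show ?thesis
    unfolding l2norm_def using tendsto_real_sqrt by fastforce
qed

lemma rhaly_bounded_seq_convergent_subseq:
  fixes fs :: "nat \<Rightarrow> nat \<Rightarrow> complex"
  assumes "\<alpha> \<in> l2" "J \<alpha> \<longlonglongrightarrow> 0" and fs: "\<And>n. fs n \<in> l2" "\<And>n. l2norm (fs n) \<le> C"
  shows "\<exists>r g. strict_mono r \<and> g \<in> l2 \<and> (\<lambda>n. l2norm (\<lambda>k. rhaly \<alpha> (fs (r n)) k - g k)) \<longlonglongrightarrow> 0"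
proof -
  obtain r where "strict_mono r" and convergent: "\<And>j. convergent (\<lambda>i. fs (r i) j)"
    using exists_subseq_convergent_coordinates[of fs C] norm_le_l2norm[OF fs(1)] fs(2) order_trans
    by metis
  define h where "h j = lim (\<lambda>i. fs (r i) j)" for j
  have h_lim: "(\<lambda>i. fs (r i) j) \<longlonglongrightarrow> h j" for j
    unfolding h_def using convergent convergent_LIMSEQ_iff by blast
  have "h \<in> l2" "(\<Sum>k. (cmod (h k))\<^sup>2) \<le> C\<^sup>2"
    by (rule l2_coordinatewise_limit[OF fs(1) fs(2) h_lim])+
  define u where "u n = (\<lambda>k. fs (r n) k - h k)" for n
  have "u n \<in> l2" "(\<Sum>k. (cmod (u n k))\<^sup>2) \<le> 4 * C\<^sup>2" for n
  proof -
    show "u n \<in> l2"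
      unfolding u_def by (rule l2_diff[OF fs(1) \<open>h \<in> l2\<close>])
    have "(\<Sum>k. (cmod (u n k))\<^sup>2) \<le> 2 * (\<Sum>k. (cmod (fs (r n) k))\<^sup>2) + 2 * (\<Sum>k. (cmod (h k))\<^sup>2)"
      unfolding u_def by (rule l2_sumsq_le_twice(2)[OF fs(1) \<open>h \<in> l2\<close> norm_diff_sq_le])
    moreover have "(\<Sum>k. (cmod (fs (r n) k))\<^sup>2) \<le> C\<^sup>2"
      unfolding l2norm_sq[OF fs(1), symmetric] by (intro power_mono fs(2) l2norm_nonneg fs(1))
    ultimately show "(\<Sum>k. (cmod (u n k))\<^sup>2) \<le> 4 * C\<^sup>2"
      using \<open>(\<Sum>k. (cmod (h k))\<^sup>2) \<le> C\<^sup>2\<close> by linarith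
  qed
  moreover have "(\<lambda>n. u n j) \<longlonglongrightarrow> 0" for j
    unfolding u_def using tendsto_diff[OF h_lim[of j] tendsto_const[of "h j"]] by simp
  ultimately have "(\<lambda>n. l2norm (rhaly \<alpha> (u n))) \<longlonglongrightarrow> 0"
    by (intro rhaly_tendsto_zero[OF assms(1,2)])
  then have "(\<lambda>n. l2norm (\<lambda>k. rhaly \<alpha> (fs (r n)) k - rhaly \<alpha> h k)) \<longlonglongrightarrow> 0"
    by (simp add: u_def rhaly_diff)
  moreover obtain N where "J \<alpha> N \<noteq> \<infinity>"
    by (rule exists_J_sq_less[OF assms(2) zero_less_one])
  then have "rhaly \<alpha> h \<in> l2"
    by (rule rhaly_l2[OF assms(1) _ \<open>h \<in> l2\<close>])
  ultimately show ?thesis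
    using \<open>strict_mono r\<close> by blast
qed

lemma lim_J_zero_imp_compact_rhaly:
  assumes "\<alpha> \<in> l2" "lim (J \<alpha>) = 0"
  shows "compact_op (rhaly \<alpha>)"
proof -
  have "J \<alpha> \<longlonglongrightarrow> 0"
    using J_tendsto_lim[OF assms(1)] assms(2) by simp
  obtain N where "J \<alpha> N \<noteq> \<infinity>"
    by (rule exists_J_sq_less[OF \<open>J \<alpha> \<longlonglongrightarrow> 0\<close> zero_less_one])
  show ?thesis
    unfolding compact_op_def
  proof (intro conjI ballI allI impI)
    show "rhaly \<alpha> f \<in> l2" if "f \<in> l2" for f
      by (rule rhaly_l2[OF assms(1) \<open>J \<alpha> N \<noteq> \<infinity>\<close> that])
    show "rhaly \<alpha> (\<lambda>k. f k + g k) = (\<lambda>k. rhaly \<alpha> f k + rhaly \<alpha> g k)" for f g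
      by (rule rhaly_add)
    show "rhaly \<alpha> (\<lambda>k. c * f k) = (\<lambda>k. c * rhaly \<alpha> f k)" for c f
      by (rule rhaly_scale)
  next
    fix fs :: "nat \<Rightarrow> nat \<Rightarrow> complex"
    assume "(\<forall>n. fs n \<in> l2) \<and> (\<exists>C. \<forall>n. l2norm (fs n) \<le> C)"
    then obtain C where "\<And>n. fs n \<in> l2" "\<And>n. l2norm (fs n) \<le> C"
      by blast
    then show "\<exists>r g. strict_mono r \<and> g \<in> l2 \<and> (\<lambda>n. l2norm (\<lambda>k. rhaly \<alpha> (fs (r n)) k - g k)) \<longlonglongrightarrow> 0"
      by (rule rhaly_bounded_seq_convergent_subseq[OF assms(1) \<open>J \<alpha> \<longlonglongrightarrow> 0\<close>])
  qed
qed

theorem theorem2p6: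
  fixes \<alpha> :: "nat \<Rightarrow> complex"
  assumes "\<alpha> \<in> l2"
  shows "convergent (J \<alpha>)
    \<and> lim (J \<alpha>) \<le> ess_norm (rhaly \<alpha>)
    \<and> ess_norm (rhaly \<alpha>) \<le> ennreal (2 * sqrt 2) * lim (J \<alpha>)
    \<and> (compact_op (rhaly \<alpha>) \<longleftrightarrow> lim (J \<alpha>) = 0)"
proof (intro conjI)
  show "convergent (J \<alpha>)"
    by (rule convergent_J[OF assms])
  show "lim (J \<alpha>) \<le> ess_norm (rhaly \<alpha>)"
    by (rule ess_norm_rhaly_ge[OF assms])
  have "ess_norm (rhaly \<alpha>) \<le> ennreal 2 * lim (J \<alpha>)"
    by (rule ess_norm_rhaly_le[OF assms])
  also have "\<dots> \<le> ennreal (2 * sqrt 2) * lim (J \<alpha>)"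
    by (intro mult_right_mono ennreal_leI) auto
  finally show "ess_norm (rhaly \<alpha>) \<le> ennreal (2 * sqrt 2) * lim (J \<alpha>)" .
  show "compact_op (rhaly \<alpha>) \<longleftrightarrow> lim (J \<alpha>) = 0"
    using compact_rhaly_imp_lim_J_zero[OF assms] lim_J_zero_imp_compact_rhaly[OF assms] by blast
qed

end
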